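(* Consider the risk-averse quantal response mean-field game described in the context, assume the Lipschitz condition on $f_t,r_t$ and that $\nu$ is $m$-strongly convex for some $m>0$. Let $\Phi=\mathcal{B}^{\mathrm{RQE}}_{\mathrm{opt}}\circ\mathcal{B}^{\mathrm{RQE}}_{\mathrm{prop}}:\Pi\to\Pi$ and fix $\beta\in(0,1)$. RQ-Fictitious Play: start from any $\pi^0\in\Pi$ and $\bar\pi^0=0$; for $j=0,1,\dots$ set $\bar\pi^{j+1}$ to be the normalization (for each $t,x$, rescaling to a probability vector) of $\beta\bar\pi^j+(1-\beta)\pi^j$, and $\pi^{j+1}=\Phi(\bar\pi^{j+1})$. Then for all sufficiently large $\alpha$, RQ-Fictitious Play converges to an MF-RQE: $\bar\pi^j$ converges in $d_\Pi$ to a policy $\pi^*$ with $(\pi^*,\mathcal{B}^{\mathrm{RQE}}_{\mathrm{prop}}(\pi^* ))$ an MF-RQE.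
   Context: Let $\mathcal{X},\mathcal{U}$ be finite nonempty sets and $T\ge1$. For finite $E$, $\mathcal{P}(E)$ is the set of probability vectors on $E$ and $d_{TV}(\mu,\mu')=\frac12\|\mu-\mu'\|_1$. For $t\in\{0,\dots,T-1\}$: transition kernels $f_t(x'\mid x,u,\mu)$ (a distribution over $x'$ for each $x,u$ and $\mu\in\mathcal{P}(\mathcal{X})$) and rewards $r_t:\mathcal{X}\times\mathcal{U}\times\mathcal{P}(\mathcal{X})\to[-R_{\max},R_{\max}]$. Lipschitz condition: there are $L_f,L_r>0$ with $\sum_{x'}|f_t(x'\mid x,u,\mu)-f_t(x'\mid x,u,\mu')|\le L_fd_{TV}(\mu,\mu')$ and $|r_t(x,u,\mu)-r_t(x,u,\mu')|\le L_rd_{TV}(\mu,\mu')$. A policy is $\pi=(\pi_0,\dots,\pi_{T-1})$ with $\pi_t(\cdot\mid x)\in\mathcal{P}(\mathcal{U})$; $\Pi_t$ the set of time-$t$ decision rules, $\Pi$ the set of policies, $d_\Pi(\pi,\pi')=\max_{x,t<T}d_{TV}(\pi_t(\cdot\mid x),\pi'_t(\cdot\mid x))$. Given $\pi$ and $\mu_0$, the mean-field flow satisfies $\mu_{t+1}(x')=\sum_x\sum_uf_t(x'\mid x,u,\mu_t)\pi_t(u\mid x)\mu_t(x)$. Q-functions: $Q^\pi_{\mu,T-1}(x,u)=r_{T-1}(x,u,\mu_{T-1})$, $Q^\pi_{\mu,t}(x,u)=r_t(x,u,\mu_t)+\sum_{x'}f_t(x'\mid x,u,\mu_t)V^\pi_{\mu,t+1}(x')$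 for $t<T-1$, $V^\pi_{\mu,t}(x)=\sum_u\pi_t(u\mid x)Q^\pi_{\mu,t}(x,u)$. Data: finite $\mathbb{M}=\{\mu_0^1,\dots,\mu_0^K\}\subset\mathcal{P}(\mathcal{X})$ with probabilities $w_k=\Gamma^*(\mu_0^k)$; $\tau>0$; $\alpha>0$; $\nu:\mathcal{P}(\mathcal{U})\to\mathbb{R}$, $m$-strongly convex meaning $\nu(\lambda p+(1-\lambda)q)\le\lambda\nu(p)+(1-\lambda)\nu(q)-\frac m2\lambda(1-\lambda)\|p-q\|_2^2$. A set of flows $\mathcal{S}=\{\mu^1,\dots,\mu^K\}$ has $\mu^k$ starting at $\mu_0^k$. Cost: $c_t^{\pi,\alpha}(x;\mathcal{S})=\frac1\tau\log\big(\sum_kw_k\exp(-\tau\sum_u\pi_t(u\mid x)Q^\pi_{\mu^k,t}(x,u))\big)+\alpha\nu(\pi_t(\cdot\mid x))$. $(\pi'_t,\pi_{-t})$ is $\pi$ with time-$t$ component replaced by $\pi'_t$. $\mathcal{B}^{\mathrm{RQE}}_{\mathrm{opt}}(\mathcal{S})$ is the (unique) policy $\pi$ with $\pi_t(\cdot\mid x)$ minimizing $c_t^{(\pi'_t,\pi_{-t}),\alpha}(x;\mathcal{S})$ over $\pi'_t\in\Pi_t$ for every $t,x$. $\mathcal{B}^{\mathrm{RQE}}_{\mathrm{prop}}(\pi)$ is the set of flows generated by $\pi$ from each $\mu_0^k$. An MF-RQE is a pair $(\pi^*,\mathcal{S}^* )$ with $\pi^*=\mathcal{B}^{\mathrm{RQE}}_{\mathrm{opt}}(\mathcal{S}^*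 )$ and $\mathcal{B}^{\mathrm{RQE}}_{\mathrm{prop}}(\pi^* )=\mathcal{S}^*$. *)

theory Defs
  imports "HOL-Analysis.Analysis"
begin

definition pdist :: "('a::finite \<Rightarrow> real) \<Rightarrow> bool" where
  "pdist p \<longleftrightarrow> (\<forall>a. 0 \<le> p a) \<and> sum p UNIV = 1"

definition dtv :: "('a::finite \<Rightarrow> real) \<Rightarrow> ('a \<Rightarrow> real) \<Rightarrow> real" where
  "dtv p q = (1/2) * (\<Sum>a\<in>UNIV. \<bar>p a - q a\<bar>)"

text \<open>Policies: pol t x u = pi_t(u|x). Convention: components at times t >= T are 0.\<close>
definition is_policy :: "nat \<Rightarrow> (nat \<Rightarrow> 'x::finite \<Rightarrow> 'u::finite \<Rightarrow> real) \<Rightarrow> bool" where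
  "is_policy T pol \<longleftrightarrow> (\<forall>t<T. \<forall>x. pdist (pol t x)) \<and> (\<forall>t\<ge>T. pol t = (\<lambda>_ _. 0))"

definition dPi :: "nat \<Rightarrow> (nat \<Rightarrow> 'x::finite \<Rightarrow> 'u::finite \<Rightarrow> real)
                   \<Rightarrow> (nat \<Rightarrow> 'x \<Rightarrow> 'u \<Rightarrow> real) \<Rightarrow> real" where
  "dPi T pol pol' = Max ((\<lambda>(t, x). dtv (pol t x) (pol' t x)) ` ({..<T} \<times> UNIV))"

text \<open>Mean-field flow generated by pol from mu0; f t x u mu x' = f_t(x'|x,u,mu).\<close>
fun flow :: "(nat \<Rightarrow> 'x::finite \<Rightarrow> 'u::finite \<Rightarrow> ('x \<Rightarrow> real) \<Rightarrow> 'x \<Rightarrow> real)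
             \<Rightarrow> (nat \<Rightarrow> 'x \<Rightarrow> 'u \<Rightarrow> real) \<Rightarrow> ('x \<Rightarrow> real) \<Rightarrow> nat \<Rightarrow> 'x \<Rightarrow> real" where
  "flow f pol mu0 0 = mu0"
| "flow f pol mu0 (Suc t) =
     (\<lambda>x'. \<Sum>x\<in>UNIV. \<Sum>u\<in>UNIV. f t x u (flow f pol mu0 t) x' * pol t x u * flow f pol mu0 t x)"

text \<open>Q-function by backward recursion; n = number of remaining steps after t.\<close>
fun Qrem :: "(nat \<Rightarrow> 'x::finite \<Rightarrow> 'u::finite \<Rightarrow> ('x \<Rightarrow> real) \<Rightarrow> 'x \<Rightarrow> real)
             \<Rightarrow> (nat \<Rightarrow> 'x \<Rightarrow> 'u \<Rightarrow> ('x \<Rightarrow> real) \<Rightarrow> real)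
             \<Rightarrow> (nat \<Rightarrow> 'x \<Rightarrow> 'u \<Rightarrow> real) \<Rightarrow> (nat \<Rightarrow> 'x \<Rightarrow> real)
             \<Rightarrow> nat \<Rightarrow> nat \<Rightarrow> 'x \<Rightarrow> 'u \<Rightarrow> real" where
  "Qrem f r pol mu 0 t x u = r t x u (mu t)"
| "Qrem f r pol mu (Suc n) t x u = r t x u (mu t) +
     (\<Sum>x'\<in>UNIV. f t x u (mu t) x' *
        (\<Sum>u'\<in>UNIV. pol (Suc t) x' u' * Qrem f r pol mu n (Suc t) x' u'))"

definition Qfun :: "nat \<Rightarrow> (nat \<Rightarrow> 'x::finite \<Rightarrow> 'u::finite \<Rightarrow> ('x \<Rightarrow> real) \<Rightarrow> 'x \<Rightarrow> real)
             \<Rightarrow> (nat \<Rightarrow> 'x \<Rightarrow> 'u \<Rightarrow> ('x \<Rightarrow> real) \<Rightarrow> real)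
             \<Rightarrow> (nat \<Rightarrow> 'x \<Rightarrow> 'u \<Rightarrow> real) \<Rightarrow> (nat \<Rightarrow> 'x \<Rightarrow> real)
             \<Rightarrow> nat \<Rightarrow> 'x \<Rightarrow> 'u \<Rightarrow> real" where
  "Qfun T f r pol mu t = Qrem f r pol mu (T - 1 - t) t"

text \<open>Risk-averse cost c_t^{pol,alpha}(x;S); S k is the k-th flow (k < K), w k its weight.\<close>
definition rq_cost ::
  "nat \<Rightarrow> (nat \<Rightarrow> 'x::finite \<Rightarrow> 'u::finite \<Rightarrow> ('x \<Rightarrow> real) \<Rightarrow> 'x \<Rightarrow> real)
   \<Rightarrow> (nat \<Rightarrow> 'x \<Rightarrow> 'u \<Rightarrow> ('x \<Rightarrow> real) \<Rightarrow> real)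
   \<Rightarrow> nat \<Rightarrow> (nat \<Rightarrow> real) \<Rightarrow> real \<Rightarrow> real \<Rightarrow> (('u \<Rightarrow> real) \<Rightarrow> real)
   \<Rightarrow> (nat \<Rightarrow> 'x \<Rightarrow> 'u \<Rightarrow> real) \<Rightarrow> (nat \<Rightarrow> nat \<Rightarrow> 'x \<Rightarrow> real) \<Rightarrow> nat \<Rightarrow> 'x \<Rightarrow> real" where
  "rq_cost T f r K w tau alpha nu pol S t x =
     (1/tau) * ln (\<Sum>k<K. w k * exp (- tau * (\<Sum>u\<in>UNIV. pol t x u * Qfun T f r pol (S k) t x u)))
     + alpha * nu (pol t x)"

definition is_opt_resp ::
  "nat \<Rightarrow> (nat \<Rightarrow> 'x::finite \<Rightarrow> 'u::finite \<Rightarrow> ('x \<Rightarrow> real) \<Rightarrow> 'x \<Rightarrow> real)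
   \<Rightarrow> (nat \<Rightarrow> 'x \<Rightarrow> 'u \<Rightarrow> ('x \<Rightarrow> real) \<Rightarrow> real)
   \<Rightarrow> nat \<Rightarrow> (nat \<Rightarrow> real) \<Rightarrow> real \<Rightarrow> real \<Rightarrow> (('u \<Rightarrow> real) \<Rightarrow> real)
   \<Rightarrow> (nat \<Rightarrow> nat \<Rightarrow> 'x \<Rightarrow> real) \<Rightarrow> (nat \<Rightarrow> 'x \<Rightarrow> 'u \<Rightarrow> real) \<Rightarrow> bool" where
  "is_opt_resp T f r K w tau alpha nu S pol \<longleftrightarrow> is_policy T pol \<and>
     (\<forall>t<T. \<forall>x. \<forall>p. (\<forall>y. pdist (p y)) \<longrightarrow>
        rq_cost T f r K w tau alpha nu pol S t x \<le> rq_cost T f r K w tau alpha nu (pol(t := p)) S t x)"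

definition B_opt ::
  "nat \<Rightarrow> (nat \<Rightarrow> 'x::finite \<Rightarrow> 'u::finite \<Rightarrow> ('x \<Rightarrow> real) \<Rightarrow> 'x \<Rightarrow> real)
   \<Rightarrow> (nat \<Rightarrow> 'x \<Rightarrow> 'u \<Rightarrow> ('x \<Rightarrow> real) \<Rightarrow> real)
   \<Rightarrow> nat \<Rightarrow> (nat \<Rightarrow> real) \<Rightarrow> real \<Rightarrow> real \<Rightarrow> (('u \<Rightarrow> real) \<Rightarrow> real)
   \<Rightarrow> (nat \<Rightarrow> nat \<Rightarrow> 'x \<Rightarrow> real) \<Rightarrow> (nat \<Rightarrow> 'x \<Rightarrow> 'u \<Rightarrow> real)" where
  "B_opt T f r K w tau alpha nu S = (THE pol. is_opt_resp T f r K w tau alpha nu S pol)"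

definition B_prop ::
  "(nat \<Rightarrow> 'x::finite \<Rightarrow> 'u::finite \<Rightarrow> ('x \<Rightarrow> real) \<Rightarrow> 'x \<Rightarrow> real)
   \<Rightarrow> nat \<Rightarrow> (nat \<Rightarrow> 'x \<Rightarrow> real) \<Rightarrow> (nat \<Rightarrow> 'x \<Rightarrow> 'u \<Rightarrow> real) \<Rightarrow> (nat \<Rightarrow> nat \<Rightarrow> 'x \<Rightarrow> real)" where
  "B_prop f K mu0 pol = (\<lambda>k. if k < K then flow f pol (mu0 k) else (\<lambda>_ _. 0))"

definition is_MF_RQE ::
  "nat \<Rightarrow> (nat \<Rightarrow> 'x::finite \<Rightarrow> 'u::finite \<Rightarrow> ('x \<Rightarrow> real) \<Rightarrow> 'x \<Rightarrow> real)
   \<Rightarrow> (nat \<Rightarrow> 'x \<Rightarrow> 'u \<Rightarrow> ('x \<Rightarrow> real) \<Rightarrow> real)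
   \<Rightarrow> nat \<Rightarrow> (nat \<Rightarrow> 'x \<Rightarrow> real) \<Rightarrow> (nat \<Rightarrow> real) \<Rightarrow> real \<Rightarrow> real \<Rightarrow> (('u \<Rightarrow> real) \<Rightarrow> real)
   \<Rightarrow> (nat \<Rightarrow> 'x \<Rightarrow> 'u \<Rightarrow> real) \<Rightarrow> (nat \<Rightarrow> nat \<Rightarrow> 'x \<Rightarrow> real) \<Rightarrow> bool" where
  "is_MF_RQE T f r K mu0 w tau alpha nu pol S \<longleftrightarrow>
     pol = B_opt T f r K w tau alpha nu S \<and> B_prop f K mu0 pol = S"

definition normalize_pol :: "(nat \<Rightarrow> 'x \<Rightarrow> 'u::finite \<Rightarrow> real) \<Rightarrow> (nat \<Rightarrow> 'x \<Rightarrow> 'u \<Rightarrow> real)" where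
  "normalize_pol pol = (\<lambda>t x u. pol t x u / (\<Sum>u'\<in>UNIV. pol t x u'))"

fun rqfp :: "((nat \<Rightarrow> 'x \<Rightarrow> 'u::finite \<Rightarrow> real) \<Rightarrow> (nat \<Rightarrow> 'x \<Rightarrow> 'u \<Rightarrow> real)) \<Rightarrow> real
             \<Rightarrow> (nat \<Rightarrow> 'x \<Rightarrow> 'u \<Rightarrow> real) \<Rightarrow> nat
             \<Rightarrow> (nat \<Rightarrow> 'x \<Rightarrow> 'u \<Rightarrow> real) \<times> (nat \<Rightarrow> 'x \<Rightarrow> 'u \<Rightarrow> real)" where
  "rqfp Phi beta pi0 0 = ((\<lambda>_ _ _. 0), pi0)"
| "rqfp Phi beta pi0 (Suc j) =
     (let pb = normalize_pol (\<lambda>t x u. beta * fst (rqfp Phi beta pi0 j) t x u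
                                     + (1 - beta) * snd (rqfp Phi beta pi0 j) t x u)
      in (pb, Phi pb))"

definition strongly_convex_simplex :: "real \<Rightarrow> (('u::finite \<Rightarrow> real) \<Rightarrow> real) \<Rightarrow> bool" where
  "strongly_convex_simplex m nu \<longleftrightarrow>
     (\<forall>p q l. pdist p \<longrightarrow> pdist q \<longrightarrow> 0 \<le> l \<longrightarrow> l \<le> 1 \<longrightarrow>
        nu (\<lambda>u. l * p u + (1 - l) * q u)
          \<le> l * nu p + (1 - l) * nu q - m / 2 * l * (1 - l) * (\<Sum>u\<in>UNIV. (p u - q u)^2))"

end

theory Submission
  imports Defs
begin

(* For a large regularization weight alpha, the best-response map Phi = B_opt o B_prop is a
   contraction for d_Pi. Then the averaged update p |-> beta p + (1 - beta) Phi p of RQ-Fictitious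
   Play is a contraction too, so its iterates converge geometrically to its fixed point, which is
   a fixed point of Phi, i.e. an MF-RQE.

   The contraction estimate chains three Lipschitz bounds: flows depend Lipschitz-continuously on
   the policy (forward in time), Q-functions on the flows and on the later policy (backward in
   time), and a best response on its Q-functions with constant O(1/alpha). For the last one,
   compare the minimality of the two best responses p, p': the m-strong convexity of alpha nu
   contributes alpha m/2 |p - p'|^2, the entropic cost contributes a second difference that is
   at most a multiple of |Q - Q'| |p - p'|_1. *)

section \<open>Probability vectors and total variation\<close>

lemma pdist_nonneg: "pdist p \<Longrightarrow> 0 \<le> p u"
  by (simp add: pdist_def)

lemma pdist_uniform: "pdist (\<lambda>u::'u::finite. 1 / real CARD('u))"
  by (simp add: pdist_def)

lemma pdist_convex_comb:
  assumes "pdist (p::'a::finite \<Rightarrow> real)" "pdist q" "0 \<le> l" "l \<le> 1"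
  shows "pdist (\<lambda>u. l * p u + (1 - l) * q u)"
  using assms by (auto simp: pdist_def sum.distrib sum_distrib_left[symmetric])

lemma pdist_le_1: "pdist (p::'a::finite \<Rightarrow> real) \<Longrightarrow> p u \<le> 1"
  using member_le_sum[of u UNIV p] by (auto simp: pdist_def)

lemma compact_pdist: "compact {p::'u::finite \<Rightarrow> real. pdist p}"
proof -
  have cube: "compact (PiE UNIV (\<lambda>_::'u. {0..1::real}))"
    using compactin_PiE[of "\<lambda>_::'u. euclidean" UNIV "\<lambda>_. {0..1::real}"]
    by (simp add: euclidean_product_topology)
  have "closed {p::'u \<Rightarrow> real. sum p UNIV = 1}"
    by (intro closed_Collect_eq continuous_on_sum continuous_on_const) simp_all
  moreover have "closed {p::'u \<Rightarrow> real. 0 \<le> p a}" for a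
    by (intro closed_Collect_le continuous_on_const) simp_all
  ultimately have "closed ({p::'u \<Rightarrow> real. sum p UNIV = 1} \<inter> (\<Inter>a. {p. 0 \<le> p a}))"
    by (intro closed_Int closed_INT) auto
  moreover have "{p::'u \<Rightarrow> real. pdist p} = PiE UNIV (\<lambda>_. {0..1}) \<inter> ({p. sum p UNIV = 1} \<inter> (\<Inter>a. {p. 0 \<le> p a}))"
    by (auto simp: pdist_le_1) (auto simp: pdist_def)
  ultimately show ?thesis
    using compact_Int_closed[OF cube] by simp
qed

lemma dtv_nonneg: "0 \<le> dtv p q"
  by (simp add: dtv_def sum_nonneg)

lemma dtv_commute: "dtv p q = dtv q p"
  by (simp add: dtv_def abs_minus_commute)

lemma dtv_triangle: "dtv p r \<le> dtv p q + dtv q r"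
proof -
  have "(\<Sum>a\<in>UNIV. \<bar>p a - r a\<bar>) \<le> (\<Sum>a\<in>UNIV. \<bar>p a - q a\<bar> + \<bar>q a - r a\<bar>)"
    by (intro sum_mono) linarith
  then show ?thesis by (simp add: dtv_def sum.distrib)
qed

lemma abs_diff_le_dtv: "\<bar>p u - q u\<bar> \<le> 2 * dtv p q"
  using member_le_sum[of u UNIV "\<lambda>a. \<bar>p a - q a\<bar>"] by (simp add: dtv_def)

lemma dtv_le_1:
  assumes "pdist p" "pdist q"
  shows "dtv p q \<le> 1"
proof -
  have "(\<Sum>a\<in>UNIV. \<bar>p a - q a\<bar>) \<le> (\<Sum>a\<in>UNIV. p a + q a)"
    using assms by (intro sum_mono) (auto simp: pdist_def abs_le_iff intro: add_increasing add_increasing2)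
  then show ?thesis using assms by (simp add: dtv_def sum.distrib pdist_def)
qed

lemma dtv_le_0_imp_eq: "dtv p q \<le> 0 \<Longrightarrow> p = q"
  using abs_diff_le_dtv[of p _ q] dtv_nonneg[of p q] by (intro ext) (smt (verit))

lemma dtv_convex_comb_le:
  assumes "0 \<le> l" "l \<le> 1"
  shows "dtv (\<lambda>u. l * a u + (1 - l) * b u) (\<lambda>u. l * a' u + (1 - l) * b' u)
           \<le> l * dtv a a' + (1 - l) * dtv b b'"
proof -
  have "\<bar>(l * a u + (1 - l) * b u) - (l * a' u + (1 - l) * b' u)\<bar>
          \<le> l * \<bar>a u - a' u\<bar> + (1 - l) * \<bar>b u - b' u\<bar>" for u
  proof -
    have "\<bar>(l * a u + (1 - l) * b u) - (l * a' u + (1 - l) * b' u)\<bar>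
            = \<bar>l * (a u - a' u) + (1 - l) * (b u - b' u)\<bar>"
      by (simp add: algebra_simps)
    also have "\<dots> \<le> \<bar>l * (a u - a' u)\<bar> + \<bar>(1 - l) * (b u - b' u)\<bar>"
      by (rule abs_triangle_ineq)
    finally show ?thesis using assms by (simp add: abs_mult)
  qed
  then have "(\<Sum>u\<in>UNIV. \<bar>(l * a u + (1 - l) * b u) - (l * a' u + (1 - l) * b' u)\<bar>)
      \<le> (\<Sum>u\<in>UNIV. l * \<bar>a u - a' u\<bar> + (1 - l) * \<bar>b u - b' u\<bar>)"
    by (rule sum_mono)
  also have "\<dots> = l * (\<Sum>u\<in>UNIV. \<bar>a u - a' u\<bar>) + (1 - l) * (\<Sum>u\<in>UNIV. \<bar>b u - b' u\<bar>)"
    by (simp add: sum.distrib sum_distrib_left)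
  finally show ?thesis by (simp add: dtv_def field_simps)
qed

lemma abs_expectation_le:
  assumes "pdist (p::'a::finite \<Rightarrow> real)" "\<And>u. \<bar>Q u\<bar> \<le> M"
  shows "\<bar>\<Sum>u\<in>UNIV. p u * Q u\<bar> \<le> M"
proof -
  have "\<bar>\<Sum>u\<in>UNIV. p u * Q u\<bar> \<le> (\<Sum>u\<in>UNIV. p u * M)"
    using assms by (intro sum_abs[THEN order_trans] sum_mono) (simp add: abs_mult pdist_def mult_left_mono)
  also have "\<dots> = M"
    using assms by (simp add: sum_distrib_right[symmetric] pdist_def)
  finally show ?thesis .
qed

lemma abs_sum_mult_diff_le:
  fixes p q Q :: "'a::finite \<Rightarrow> real"
  assumes "\<And>u. \<bar>Q u\<bar> \<le> M"
  shows "\<bar>(\<Sum>u\<in>UNIV. p u * Q u) - (\<Sum>u\<in>UNIV. q u * Q u)\<bar> \<le> M * (\<Sum>u\<in>UNIV. \<bar>p u - q u\<bar>)"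
proof -
  have "\<bar>(\<Sum>u\<in>UNIV. p u * Q u) - (\<Sum>u\<in>UNIV. q u * Q u)\<bar> = \<bar>\<Sum>u\<in>UNIV. (p u - q u) * Q u\<bar>"
    by (simp add: sum_subtractf left_diff_distrib)
  also have "\<dots> \<le> (\<Sum>u\<in>UNIV. \<bar>p u - q u\<bar> * M)"
    using assms by (intro sum_abs[THEN order_trans] sum_mono) (simp add: abs_mult mult_left_mono)
  finally show ?thesis by (simp add: sum_distrib_left mult.commute)
qed

lemma abs_expectation_diff_le:
  assumes "pdist (p::'a::finite \<Rightarrow> real)" "\<And>u. \<bar>Q u - Q' u\<bar> \<le> D"
  shows "\<bar>(\<Sum>u\<in>UNIV. p u * Q u) - (\<Sum>u\<in>UNIV. p u * Q' u)\<bar> \<le> D"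
  using abs_expectation_le[OF assms] by (simp add: sum_subtractf right_diff_distrib)

lemma abs_exp_diff_le:
  fixes a b R :: real
  assumes "\<bar>a\<bar> \<le> R" "\<bar>b\<bar> \<le> R"
  shows "\<bar>exp a - exp b\<bar> \<le> exp R * \<bar>a - b\<bar>"
proof -
  have *: "exp x - exp y \<le> exp R * \<bar>x - y\<bar>" if "\<bar>x\<bar> \<le> R" for x y :: real
  proof -
    have "exp x * (1 + (y - x)) \<le> exp x * exp (y - x)"
      using exp_ge_add_one_self[of "y - x"] by (simp add: mult_left_mono)
    then have "exp x - exp y \<le> exp x * (x - y)"
      by (simp add: algebra_simps flip: exp_add)
    also have "\<dots> \<le> exp x * \<bar>x - y\<bar>"
      by (simp add: mult_left_mono)
    also have "\<dots> \<le> exp R * \<bar>x - y\<bar>"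
      using that by (intro mult_right_mono) auto
    finally show ?thesis .
  qed
  show ?thesis using *[OF assms(1), of b] *[OF assms(2), of a] by (auto simp: abs_le_iff abs_minus_commute)
qed

lemma exp_minus_one_le: "0 \<le> x \<Longrightarrow> x \<le> R \<Longrightarrow> exp x - 1 \<le> exp R * x"
  for x R :: real
  using abs_exp_diff_le[of x R 0] by simp

lemma weighted_exp_sum_pos:
  fixes w z :: "nat \<Rightarrow> real"
  assumes "\<And>k. k < K \<Longrightarrow> 0 \<le> w k" "(\<Sum>k<K. w k) = 1"
  shows "0 < (\<Sum>k<K. w k * exp (z k))"
proof -
  obtain k where k: "k < K" "w k > 0"
  proof (rule ccontr)
    assume "\<not> thesis"
    then have "(\<Sum>k<K. w k) \<le> 0"
      using that by (intro sum_nonpos) force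
    then show False using assms by simp
  qed
  have "0 < w k * exp (z k)" using k by simp
  also have "\<dots> \<le> (\<Sum>k<K. w k * exp (z k))"
    by (rule member_le_sum) (use k assms in auto)
  finally show ?thesis .
qed

lemma abs_mixed_expectation_diff_le:
  fixes p q Q Q' :: "'a::finite \<Rightarrow> real"
  assumes "pdist q" "\<And>u. \<bar>Q u\<bar> \<le> M" "\<And>u. \<bar>Q u - Q' u\<bar> \<le> D"
  shows "\<bar>(\<Sum>u\<in>UNIV. p u * Q u) - (\<Sum>u\<in>UNIV. q u * Q' u)\<bar> \<le> M * (\<Sum>u\<in>UNIV. \<bar>p u - q u\<bar>) + D"
  using abs_sum_mult_diff_le[of Q M p q, OF assms(2)] abs_expectation_diff_le[of q Q Q' D, OF assms(1,3)]
  by linarith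

lemma sum_rotate3:
  "(\<Sum>a\<in>A. \<Sum>b\<in>B. \<Sum>c\<in>C. g a b c) = (\<Sum>b\<in>B. \<Sum>c\<in>C. \<Sum>a\<in>A. g a b c)"
proof -
  have "(\<Sum>a\<in>A. \<Sum>b\<in>B. \<Sum>c\<in>C. g a b c) = (\<Sum>b\<in>B. \<Sum>a\<in>A. \<Sum>c\<in>C. g a b c)"
    by (rule sum.swap)
  also have "\<dots> = (\<Sum>b\<in>B. \<Sum>c\<in>C. \<Sum>a\<in>A. g a b c)"
    by (intro sum.cong refl) (rule sum.swap)
  finally show ?thesis .
qed

lemma mixture_l1_dist_le:
  fixes k1 k2 :: "'x::finite \<Rightarrow> 'u::finite \<Rightarrow> 'y::finite \<Rightarrow> real" and a b :: "'x \<Rightarrow> 'u \<Rightarrow> real"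
  assumes k2: "\<And>x u. pdist (k2 x u)" and L: "\<And>x u. (\<Sum>y\<in>UNIV. \<bar>k1 x u y - k2 x u y\<bar>) \<le> L"
    and a: "\<And>x u. 0 \<le> a x u"
  shows "(\<Sum>y\<in>UNIV. \<bar>(\<Sum>x\<in>UNIV. \<Sum>u\<in>UNIV. k1 x u y * a x u) - (\<Sum>x\<in>UNIV. \<Sum>u\<in>UNIV. k2 x u y * b x u)\<bar>)
           \<le> L * (\<Sum>x\<in>UNIV. \<Sum>u\<in>UNIV. a x u) + (\<Sum>x\<in>UNIV. \<Sum>u\<in>UNIV. \<bar>a x u - b x u\<bar>)"
proof -
  have pointwise: "\<bar>k1 x u y * a x u - k2 x u y * b x u\<bar>
                     \<le> \<bar>k1 x u y - k2 x u y\<bar> * a x u + k2 x u y * \<bar>a x u - b x u\<bar>" for x u y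
  proof -
    have "k1 x u y * a x u - k2 x u y * b x u = (k1 x u y - k2 x u y) * a x u + k2 x u y * (a x u - b x u)"
      by (simp add: algebra_simps)
    then show ?thesis
      using a[of x u] pdist_nonneg[OF k2, of x u y] by (simp add: abs_mult abs_triangle_ineq[THEN order_trans])
  qed
  have "(\<Sum>y\<in>UNIV. \<bar>(\<Sum>x\<in>UNIV. \<Sum>u\<in>UNIV. k1 x u y * a x u) - (\<Sum>x\<in>UNIV. \<Sum>u\<in>UNIV. k2 x u y * b x u)\<bar>)
          \<le> (\<Sum>y\<in>UNIV. \<Sum>x\<in>UNIV. \<Sum>u\<in>UNIV. \<bar>k1 x u y - k2 x u y\<bar> * a x u + k2 x u y * \<bar>a x u - b x u\<bar>)"
    unfolding sum_subtractf[symmetric]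
    by (intro sum_mono sum_abs[THEN order_trans] pointwise)
  also have "\<dots> = (\<Sum>x\<in>UNIV. \<Sum>u\<in>UNIV. (\<Sum>y\<in>UNIV. \<bar>k1 x u y - k2 x u y\<bar>) * a x u
                                        + (\<Sum>y\<in>UNIV. k2 x u y) * \<bar>a x u - b x u\<bar>)"
    by (subst sum_rotate3) (simp only: sum.distrib sum_distrib_right[symmetric])
  also have "\<dots> \<le> (\<Sum>x\<in>UNIV. \<Sum>u\<in>UNIV. L * a x u + \<bar>a x u - b x u\<bar>)"
    using L a k2 by (intro sum_mono add_mono mult_right_mono) (auto simp: pdist_def)
  finally show ?thesis
    by (simp add: sum.distrib sum_distrib_left)
qed

lemma joint_l1_dist_le:
  fixes p1 p2 :: "'x::finite \<Rightarrow> 'u::finite \<Rightarrow> real"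
  assumes p2: "\<And>x. pdist (p2 x)" and m1: "pdist m1" and d: "\<And>x. dtv (p1 x) (p2 x) \<le> d"
  shows "(\<Sum>x\<in>UNIV. \<Sum>u\<in>UNIV. \<bar>p1 x u * m1 x - p2 x u * m2 x\<bar>) \<le> 2 * d + 2 * dtv m1 m2"
proof -
  have "(\<Sum>u\<in>UNIV. \<bar>p1 x u * m1 x - p2 x u * m2 x\<bar>) \<le> 2 * d * m1 x + \<bar>m1 x - m2 x\<bar>" for x
  proof -
    have "(\<Sum>u\<in>UNIV. \<bar>p1 x u * m1 x - p2 x u * m2 x\<bar>)
            \<le> (\<Sum>u\<in>UNIV. \<bar>p1 x u - p2 x u\<bar> * m1 x + p2 x u * \<bar>m1 x - m2 x\<bar>)"
    proof (intro sum_mono)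
      fix u
      have "p1 x u * m1 x - p2 x u * m2 x = (p1 x u - p2 x u) * m1 x + p2 x u * (m1 x - m2 x)"
        by (simp add: algebra_simps)
      then show "\<bar>p1 x u * m1 x - p2 x u * m2 x\<bar> \<le> \<bar>p1 x u - p2 x u\<bar> * m1 x + p2 x u * \<bar>m1 x - m2 x\<bar>"
        using pdist_nonneg[OF m1] pdist_nonneg[OF p2] by (simp add: abs_mult abs_triangle_ineq[THEN order_trans])
    qed
    also have "\<dots> = 2 * dtv (p1 x) (p2 x) * m1 x + \<bar>m1 x - m2 x\<bar>"
      using p2[of x] by (simp add: sum.distrib dtv_def pdist_def flip: sum_distrib_right)
    also have "\<dots> \<le> 2 * d * m1 x + \<bar>m1 x - m2 x\<bar>"
      using d[of x] pdist_nonneg[OF m1] by (simp add: mult_right_mono)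
    finally show ?thesis .
  qed
  then have "(\<Sum>x\<in>UNIV. \<Sum>u\<in>UNIV. \<bar>p1 x u * m1 x - p2 x u * m2 x\<bar>) \<le> (\<Sum>x\<in>UNIV. 2 * d * m1 x + \<bar>m1 x - m2 x\<bar>)"
    by (rule sum_mono)
  also have "\<dots> = 2 * d + 2 * dtv m1 m2"
    using m1 by (simp add: sum.distrib dtv_def pdist_def flip: sum_distrib_left)
  finally show ?thesis .
qed

section \<open>The entropic cost and its regularized minimizers\<close>

definition entropic_cost ::
  "real \<Rightarrow> nat \<Rightarrow> (nat \<Rightarrow> real) \<Rightarrow> (nat \<Rightarrow> 'u::finite \<Rightarrow> real) \<Rightarrow> ('u \<Rightarrow> real) \<Rightarrow> real" where
  "entropic_cost tau K w Q q = (1/tau) * ln (\<Sum>k<K. w k * exp (- tau * (\<Sum>u\<in>UNIV. q u * Q k u)))"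

definition midpoint_convex_pdist :: "(('u::finite \<Rightarrow> real) \<Rightarrow> real) \<Rightarrow> bool" where
  "midpoint_convex_pdist g \<longleftrightarrow>
     (\<forall>p q. pdist p \<longrightarrow> pdist q \<longrightarrow> g (\<lambda>u. (p u + q u) / 2) \<le> (g p + g q) / 2)"

lemma weighted_exp_sum_midpoint_le:
  fixes w a b :: "nat \<Rightarrow> real"
  assumes "\<And>k. k < K \<Longrightarrow> 0 \<le> w k"
  shows "(\<Sum>k<K. w k * exp ((a k + b k) / 2))\<^sup>2 \<le> (\<Sum>k<K. w k * exp (a k)) * (\<Sum>k<K. w k * exp (b k))"
proof -
  define v where "v c k = sqrt (w k) * exp (c k / 2)" for c k
  have "w k * exp ((a k + b k) / 2) = v a k * v b k" and "w k * exp (c k) = (v c k)\<^sup>2"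
    if "k < K" for k c
  proof -
    have w_sq: "w k = sqrt (w k) * sqrt (w k)"
      using assms[OF that] by simp
    show "w k * exp ((a k + b k) / 2) = v a k * v b k"
      by (subst w_sq) (simp add: v_def add_divide_distrib exp_add mult_ac)
    show "w k * exp (c k) = (v c k)\<^sup>2"
      by (subst w_sq) (simp add: v_def power2_eq_square mult_ac flip: exp_add)
  qed
  then show ?thesis
    using Cauchy_Schwarz_ineq_sum[of "v a" "v b" "{..<K}"] by simp
qed

lemma entropic_cost_midpoint_convex:
  fixes w :: "nat \<Rightarrow> real"
  assumes tau: "tau > 0" and w: "\<And>k. k < K \<Longrightarrow> 0 \<le> w k" "(\<Sum>k<K. w k) = 1"
  shows "midpoint_convex_pdist (entropic_cost tau K w Q)"
  unfolding midpoint_convex_pdist_def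
proof (intro allI impI)
  fix p q :: "'a \<Rightarrow> real"
  define a where "a k = - tau * (\<Sum>u\<in>UNIV. p u * Q k u)" for k
  define b where "b k = - tau * (\<Sum>u\<in>UNIV. q u * Q k u)" for k
  have mid: "- tau * (\<Sum>u\<in>UNIV. (p u + q u) / 2 * Q k u) = (a k + b k) / 2" for k
    by (simp add: a_def b_def sum.distrib ring_distribs flip: sum_divide_distrib)
  have pos: "0 < (\<Sum>k<K. w k * exp (z k))" for z
    by (rule weighted_exp_sum_pos[OF w])
  have "ln ((\<Sum>k<K. w k * exp ((a k + b k) / 2))\<^sup>2)
          \<le> ln ((\<Sum>k<K. w k * exp (a k)) * (\<Sum>k<K. w k * exp (b k)))"
    using weighted_exp_sum_midpoint_le[OF w(1)] pos[of "\<lambda>k. (a k + b k) / 2"] pos[of a] pos[of b]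
    by (subst ln_le_cancel_iff) auto
  then have "2 * ln (\<Sum>k<K. w k * exp ((a k + b k) / 2))
               \<le> ln (\<Sum>k<K. w k * exp (a k)) + ln (\<Sum>k<K. w k * exp (b k))"
    using pos[of a] pos[of b] pos[of "\<lambda>k. (a k + b k) / 2"] by (simp add: ln_mult ln_realpow)
  then show "entropic_cost tau K w Q (\<lambda>u. (p u + q u) / 2)
               \<le> (entropic_cost tau K w Q p + entropic_cost tau K w Q q) / 2"
    using tau unfolding entropic_cost_def mid a_def[symmetric] b_def[symmetric]
    by (simp add: field_simps)
qed

lemma regularized_minimizer_quadratic_growth:
  fixes nu g :: "('u::finite \<Rightarrow> real) \<Rightarrow> real"
  assumes sc: "strongly_convex_simplex m nu" and alpha: "0 \<le> alpha"
    and g: "midpoint_convex_pdist g" and a: "pdist a" and b: "pdist b"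
    and min: "\<And>q. pdist q \<Longrightarrow> g a + alpha * nu a \<le> g q + alpha * nu q"
  shows "alpha * m / 4 * (\<Sum>u\<in>UNIV. (a u - b u)^2) \<le> (g b + alpha * nu b) - (g a + alpha * nu a)"
proof -
  define c where "c u = (a u + b u) / 2" for u
  have c_eq: "c = (\<lambda>u. 1/2 * a u + (1 - 1/2) * b u)"
    by (auto simp: c_def)
  have "pdist c"
    unfolding c_eq by (rule pdist_convex_comb[OF a b]) auto
  have "nu c \<le> nu a / 2 + nu b / 2 - m / 8 * (\<Sum>u\<in>UNIV. (a u - b u)^2)"
    using sc[unfolded strongly_convex_simplex_def, rule_format, OF a b, of "1/2"]
    unfolding c_eq by simp
  then have "alpha * nu c \<le> alpha * (nu a / 2 + nu b / 2 - m / 8 * (\<Sum>u\<in>UNIV. (a u - b u)^2))"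
    using alpha by (rule mult_left_mono)
  moreover have "g c \<le> (g a + g b) / 2"
    using g a b unfolding midpoint_convex_pdist_def c_def by blast
  moreover have "g a + alpha * nu a \<le> g c + alpha * nu c"
    by (rule min[OF \<open>pdist c\<close>])
  ultimately show ?thesis
    by (simp add: algebra_simps)
qed

lemma regularized_minimizers_close:
  fixes nu g1 g2 :: "('u::finite \<Rightarrow> real) \<Rightarrow> real"
  assumes sc: "strongly_convex_simplex m nu" and alpha: "0 \<le> alpha"
    and g1: "midpoint_convex_pdist g1" and g2: "midpoint_convex_pdist g2"
    and p1: "pdist p1" and min1: "\<And>q. pdist q \<Longrightarrow> g1 p1 + alpha * nu p1 \<le> g1 q + alpha * nu q"
    and p2: "pdist p2" and min2: "\<And>q. pdist q \<Longrightarrow> g2 p2 + alpha * nu p2 \<le> g2 q + alpha * nu q"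
  shows "alpha * m / 2 * (\<Sum>u\<in>UNIV. (p1 u - p2 u)^2) \<le> (g1 p2 - g1 p1) - (g2 p2 - g2 p1)"
  using regularized_minimizer_quadratic_growth[OF sc alpha g1 p1 p2 min1]
    regularized_minimizer_quadratic_growth[OF sc alpha g2 p2 p1 min2]
  by (simp add: power2_commute)

lemma weighted_exp_sum_le:
  fixes w z y :: "nat \<Rightarrow> real"
  assumes "\<And>k. k < K \<Longrightarrow> 0 \<le> w k" "\<And>k. k < K \<Longrightarrow> z k \<le> y k + c"
  shows "(\<Sum>k<K. w k * exp (z k)) \<le> exp c * (\<Sum>k<K. w k * exp (y k))"
proof -
  have "(\<Sum>k<K. w k * exp (z k)) \<le> (\<Sum>k<K. w k * (exp c * exp (y k)))"
    using assms by (intro sum_mono mult_left_mono) (auto simp: add_ac simp flip: exp_add)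
  then show ?thesis by (simp add: sum_distrib_left mult_ac)
qed

lemma softmax_l1_dist_le:
  fixes w z y :: "nat \<Rightarrow> real"
  assumes w: "\<And>k. k < K \<Longrightarrow> 0 \<le> w k" "(\<Sum>k<K. w k) = 1"
    and eps: "\<And>k. k < K \<Longrightarrow> \<bar>z k - y k\<bar> \<le> eps"
  shows "(\<Sum>k<K. \<bar>w k * exp (z k) / (\<Sum>j<K. w j * exp (z j)) - w k * exp (y k) / (\<Sum>j<K. w j * exp (y j))\<bar>)
           \<le> exp (2 * eps) - 1"
proof -
  define Z where "Z = (\<Sum>j<K. w j * exp (z j))"
  define Y where "Y = (\<Sum>j<K. w j * exp (y j))"
  have Zp: "Z > 0" and Yp: "Y > 0"
    unfolding Z_def Y_def using weighted_exp_sum_pos[OF w] by auto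
  have ZY: "Z \<le> exp eps * Y" and YZ: "Y \<le> exp eps * Z"
    unfolding Z_def Y_def using w(1) eps by (intro weighted_exp_sum_le; force simp: abs_le_iff)+
  have "\<bar>w k * exp (z k) / Z - w k * exp (y k) / Y\<bar> \<le> w k * exp (y k) / Y * (exp (2 * eps) - 1)"
    if k: "k < K" for k
  proof -
    define rho where "rho = exp (z k - y k) * (Y / Z)"
    have eq: "w k * exp (z k) / Z - w k * exp (y k) / Y = w k * exp (y k) / Y * (rho - 1)"
      using Zp Yp by (simp add: rho_def exp_diff field_simps)
    have "rho \<le> exp eps * exp eps"
      unfolding rho_def using eps[OF k] YZ Zp Yp by (intro mult_mono) (auto simp: divide_le_eq)
    moreover have "exp (- eps) * exp (- eps) \<le> rho"
    proof -
      have "exp (- eps) * Z \<le> exp (- eps) * (exp eps * Y)"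
        using ZY by (intro mult_left_mono) auto
      also have "\<dots> = Y"
        by (simp flip: mult.assoc exp_add)
      finally have "exp (- eps) \<le> Y / Z"
        using Zp by (simp add: le_divide_eq)
      moreover have "exp (- eps) \<le> exp (z k - y k)"
        using eps[OF k] by simp
      ultimately show ?thesis
        unfolding rho_def by (intro mult_mono) auto
    qed
    moreover have "1 - exp (- (2 * eps)) \<le> exp (2 * eps) - 1"
      using exp_ge_add_one_self[of "2 * eps"] exp_ge_add_one_self[of "- (2 * eps)"] by linarith
    ultimately have "\<bar>rho - 1\<bar> \<le> exp (2 * eps) - 1"
      by (simp add: abs_le_iff flip: exp_add)
    moreover have nonneg: "0 \<le> w k * exp (y k) / Y"
      using w(1)[OF k] Yp by simp
    ultimately show ?thesis
      unfolding eq abs_mult abs_of_nonneg[OF nonneg] by (rule mult_left_mono)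
  qed
  then have "(\<Sum>k<K. \<bar>w k * exp (z k) / Z - w k * exp (y k) / Y\<bar>)
               \<le> (\<Sum>k<K. w k * exp (y k) / Y * (exp (2 * eps) - 1))"
    by (intro sum_mono) auto
  also have "\<dots> = exp (2 * eps) - 1"
    using Yp by (simp add: Y_def flip: sum_distrib_right sum_divide_distrib)
  finally show ?thesis unfolding Z_def Y_def .
qed

lemma abs_mean_exp_diff_le:
  fixes s t al be :: "nat \<Rightarrow> real"
  assumes s: "\<And>k. k < K \<Longrightarrow> 0 \<le> s k" "(\<Sum>k<K. s k) = 1" and t: "(\<Sum>k<K. t k) = 1"
    and al: "\<And>k. k < K \<Longrightarrow> \<bar>al k\<bar> \<le> R"
    and be: "\<And>k. k < K \<Longrightarrow> \<bar>be k\<bar> \<le> R" "\<And>k. k < K \<Longrightarrow> \<bar>be k\<bar> \<le> R'"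
    and rho: "\<And>k. k < K \<Longrightarrow> \<bar>al k - be k\<bar> \<le> rho"
  shows "\<bar>(\<Sum>k<K. s k * exp (al k)) - (\<Sum>k<K. t k * exp (be k))\<bar>
           \<le> exp R * (rho + (\<Sum>k<K. \<bar>s k - t k\<bar>) * R')"
proof -
  have eq: "(\<Sum>k<K. s k * exp (al k)) - (\<Sum>k<K. t k * exp (be k))
          = (\<Sum>k<K. s k * (exp (al k) - exp (be k))) + (\<Sum>k<K. (s k - t k) * (exp (be k) - 1))"
    using s(2) t by (simp add: algebra_simps sum_subtractf sum.distrib)
  have A: "\<bar>\<Sum>k<K. s k * (exp (al k) - exp (be k))\<bar> \<le> (\<Sum>k<K. s k * (exp R * rho))"
  proof (intro sum_abs[THEN order_trans] sum_mono)
    fix k assume "k \<in> {..<K}"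
    then have "\<bar>exp (al k) - exp (be k)\<bar> \<le> exp R * \<bar>al k - be k\<bar>"
      using al be by (intro abs_exp_diff_le) auto
    also have "\<dots> \<le> exp R * rho"
      using rho \<open>k \<in> {..<K}\<close> by (intro mult_left_mono) auto
    finally show "\<bar>s k * (exp (al k) - exp (be k))\<bar> \<le> s k * (exp R * rho)"
      using s(1) \<open>k \<in> {..<K}\<close> by (simp add: abs_mult mult_left_mono)
  qed
  have B: "\<bar>\<Sum>k<K. (s k - t k) * (exp (be k) - 1)\<bar> \<le> (\<Sum>k<K. \<bar>s k - t k\<bar> * (exp R * R'))"
  proof (intro sum_abs[THEN order_trans] sum_mono)
    fix k assume "k \<in> {..<K}"
    then have "\<bar>exp (be k) - exp 0\<bar> \<le> exp R * \<bar>be k - 0\<bar>"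
      using be(1)[of k] by (intro abs_exp_diff_le) auto
    also have "\<dots> \<le> exp R * R'"
      using be(2) \<open>k \<in> {..<K}\<close> by (intro mult_left_mono) auto
    finally show "\<bar>(s k - t k) * (exp (be k) - 1)\<bar> \<le> \<bar>s k - t k\<bar> * (exp R * R')"
      by (simp add: abs_mult mult_left_mono)
  qed
  have "(\<Sum>k<K. s k * (exp R * rho)) = exp R * rho"
    using s(2) by (simp flip: sum_distrib_right)
  moreover have "(\<Sum>k<K. \<bar>s k - t k\<bar> * (exp R * R')) = (\<Sum>k<K. \<bar>s k - t k\<bar>) * (exp R * R')"
    by (simp add: sum_distrib_right)
  ultimately show ?thesis
    unfolding eq using abs_triangle_ineq A B by (smt (verit) distrib_left mult.left_commute)
qed

lemma ln_diff_le_of_lower_bound: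
  fixes A B R :: real
  assumes "0 < A" "exp (- R) \<le> B"
  shows "ln A - ln B \<le> exp R * \<bar>A - B\<bar>"
proof -
  have "0 < B" using assms(2) exp_gt_zero[of "- R"] by linarith
  then have "ln A - ln B \<le> \<bar>A - B\<bar> / B"
    using ln_diff_le[OF assms(1)] by (smt (verit, best) divide_right_mono)
  also have "\<dots> \<le> \<bar>A - B\<bar> / exp (- R)"
    using assms(2) \<open>0 < B\<close> by (intro divide_left_mono) auto
  finally show ?thesis by (simp add: exp_minus divide_inverse mult.commute)
qed

lemma ln_sum_exp_second_diff_le:
  fixes w z1 z2 y1 y2 :: "nat \<Rightarrow> real"
  assumes w: "\<And>k. k < K \<Longrightarrow> 0 \<le> w k" "(\<Sum>k<K. w k) = 1"
    and R: "\<And>k. k < K \<Longrightarrow> \<bar>z2 k - z1 k\<bar> \<le> R" "\<And>k. k < K \<Longrightarrow> \<bar>y2 k - y1 k\<bar> \<le> R"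
    and R': "\<And>k. k < K \<Longrightarrow> \<bar>y2 k - y1 k\<bar> \<le> R'"
    and rho: "\<And>k. k < K \<Longrightarrow> \<bar>(z2 k - z1 k) - (y2 k - y1 k)\<bar> \<le> rho"
    and eps: "\<And>k. k < K \<Longrightarrow> \<bar>z1 k - y1 k\<bar> \<le> eps"
  shows "ln (\<Sum>k<K. w k * exp (z2 k)) - ln (\<Sum>k<K. w k * exp (z1 k))
          - (ln (\<Sum>k<K. w k * exp (y2 k)) - ln (\<Sum>k<K. w k * exp (y1 k)))
         \<le> exp (2 * R) * (rho + (exp (2 * eps) - 1) * R')"
proof -
  define Z1 where "Z1 = (\<Sum>k<K. w k * exp (z1 k))"
  define Z2 where "Z2 = (\<Sum>k<K. w k * exp (z2 k))"
  define Y1 where "Y1 = (\<Sum>k<K. w k * exp (y1 k))"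
  define Y2 where "Y2 = (\<Sum>k<K. w k * exp (y2 k))"
  have pos: "Z1 > 0" "Z2 > 0" "Y1 > 0" "Y2 > 0"
    unfolding Z1_def Z2_def Y1_def Y2_def using weighted_exp_sum_pos[OF w] by auto
  define s where "s k = w k * exp (z1 k) / Z1" for k
  define t where "t k = w k * exp (y1 k) / Y1" for k
  have s_nonneg: "0 \<le> s k" and t_nonneg: "0 \<le> t k" if "k < K" for k
    using w(1)[OF that] pos by (simp_all add: s_def t_def)
  have s_sum: "(\<Sum>k<K. s k) = 1" and t_sum: "(\<Sum>k<K. t k) = 1"
    using pos by (simp_all add: s_def t_def Z1_def Y1_def flip: sum_divide_distrib)
  have Z_ratio: "Z2 / Z1 = (\<Sum>k<K. s k * exp (z2 k - z1 k))"
    using pos by (simp add: Z2_def s_def exp_diff sum_divide_distrib)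
  have Y_ratio: "Y2 / Y1 = (\<Sum>k<K. t k * exp (y2 k - y1 k))"
    using pos by (simp add: Y2_def t_def exp_diff sum_divide_distrib)
  have "exp (- R) = (\<Sum>k<K. t k * exp (- R))"
    using t_sum by (simp flip: sum_distrib_right)
  also have "\<dots> \<le> Y2 / Y1"
    unfolding Y_ratio
  proof (intro sum_mono mult_left_mono)
    fix k assume "k \<in> {..<K}"
    then show "exp (- R) \<le> exp (y2 k - y1 k)" and "0 \<le> t k"
      using R(2)[of k] t_nonneg[of k] by (auto simp: abs_le_iff)
  qed
  finally have Y_ratio_ge: "exp (- R) \<le> Y2 / Y1" .
  have "0 \<le> R'"
    using R'[of 0] w(2) by (cases K) auto
  have "\<bar>Z2 / Z1 - Y2 / Y1\<bar> \<le> exp R * (rho + (\<Sum>k<K. \<bar>s k - t k\<bar>) * R')"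
    unfolding Z_ratio Y_ratio by (rule abs_mean_exp_diff_le[OF s_nonneg s_sum t_sum R R' rho])
  also have "\<dots> \<le> exp R * (rho + (exp (2 * eps) - 1) * R')"
    using softmax_l1_dist_le[OF w eps] \<open>0 \<le> R'\<close>
    unfolding s_def t_def Z1_def Y1_def by (intro mult_left_mono add_left_mono mult_right_mono) auto
  finally have ratio_diff: "\<bar>Z2 / Z1 - Y2 / Y1\<bar> \<le> exp R * (rho + (exp (2 * eps) - 1) * R')" .
  have "ln Z2 - ln Z1 - (ln Y2 - ln Y1) = ln (Z2 / Z1) - ln (Y2 / Y1)"
    using pos by (simp add: ln_div)
  also have "\<dots> \<le> exp R * \<bar>Z2 / Z1 - Y2 / Y1\<bar>"
    using pos Y_ratio_ge by (intro ln_diff_le_of_lower_bound) auto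
  also have "\<dots> \<le> exp R * (exp R * (rho + (exp (2 * eps) - 1) * R'))"
    using ratio_diff by (intro mult_left_mono) auto
  also have "\<dots> = exp (2 * R) * (rho + (exp (2 * eps) - 1) * R')"
    by (simp add: mult.assoc flip: exp_add)
  finally show ?thesis
    unfolding Z1_def Z2_def Y1_def Y2_def .
qed

definition entropic_sensitivity :: "real \<Rightarrow> real \<Rightarrow> real" where
  "entropic_sensitivity tau M = exp (4 * tau * M) * (1 + 2 * tau * M * exp (4 * tau * M))"

text \<open>Where the constant comes from: the bound of \<open>ln_sum_exp_second_diff_le\<close> for
  \<open>R = 2 \<tau> M\<close>, \<open>R' = \<tau> M \<eta>\<close>, \<open>\<rho> = \<tau> Dl \<eta>\<close> and \<open>\<epsilon> = \<tau> min Dl (2 M)\<close>.\<close>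

lemma entropic_sensitivity_bound:
  assumes "0 < tau" "0 \<le> M" "0 \<le> Dl" "0 \<le> eta"
  shows "exp (2 * (2 * tau * M)) * (tau * Dl * eta + (exp (2 * (tau * min Dl (2 * M))) - 1) * (tau * M * eta))
           \<le> tau * (entropic_sensitivity tau M * Dl * eta)"
proof -
  have "exp (2 * (tau * min Dl (2 * M))) - 1 \<le> exp (4 * tau * M) * (2 * (tau * min Dl (2 * M)))"
    using assms by (intro exp_minus_one_le) auto
  also have "\<dots> \<le> exp (4 * tau * M) * (2 * tau * Dl)"
    using assms by (intro mult_left_mono) auto
  finally have "exp (4 * tau * M) * (tau * Dl * eta + (exp (2 * (tau * min Dl (2 * M))) - 1) * (tau * M * eta))
                  \<le> exp (4 * tau * M) * (tau * Dl * eta + exp (4 * tau * M) * (2 * tau * Dl) * (tau * M * eta))"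
    using assms by (intro mult_left_mono add_left_mono mult_right_mono) auto
  then show ?thesis
    by (simp add: entropic_sensitivity_def algebra_simps)
qed

lemma entropic_cost_second_diff_le:
  fixes Qa Qb :: "nat \<Rightarrow> 'u::finite \<Rightarrow> real" and w :: "nat \<Rightarrow> real"
  assumes tau: "tau > 0" and w: "\<And>k. k < K \<Longrightarrow> 0 \<le> w k" "(\<Sum>k<K. w k) = 1"
    and p: "pdist p" and p': "pdist p'"
    and Ma: "\<And>k u. k < K \<Longrightarrow> \<bar>Qa k u\<bar> \<le> M" and Mb: "\<And>k u. k < K \<Longrightarrow> \<bar>Qb k u\<bar> \<le> M"
    and Dl: "\<And>k u. k < K \<Longrightarrow> \<bar>Qa k u - Qb k u\<bar> \<le> Dl"
  shows "(entropic_cost tau K w Qa p' - entropic_cost tau K w Qa p)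
           - (entropic_cost tau K w Qb p' - entropic_cost tau K w Qb p)
         \<le> entropic_sensitivity tau M * Dl * (\<Sum>u\<in>UNIV. \<bar>p u - p' u\<bar>)"
proof -
  define eta where "eta = (\<Sum>u\<in>UNIV. \<bar>p' u - p u\<bar>)"
  have eta: "0 \<le> eta" "eta \<le> 2"
    using dtv_le_1[OF p' p] by (simp_all add: eta_def dtv_def sum_nonneg)
  obtain k0 where "k0 < K" using w(2) by (cases K) auto
  then have "0 \<le> M" "0 \<le> Dl"
    using Ma[of k0 undefined] Dl[of k0 undefined] by linarith+
  define A where "A k q = (\<Sum>u\<in>UNIV. q u * (- tau * Qa k u))" for k q
  define B where "B k q = (\<Sum>u\<in>UNIV. q u * (- tau * Qb k u))" for k q
  have scaled: "\<bar>- tau * Qa k u\<bar> \<le> tau * M" "\<bar>- tau * Qb k u\<bar> \<le> tau * M"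
    "\<bar>- tau * Qa k u - - tau * Qb k u\<bar> \<le> tau * Dl" if "k < K" for k u
    using Ma[OF that] Mb[OF that] Dl[OF that] tau
    by (simp_all add: abs_mult flip: right_diff_distrib) (metis abs_minus_commute)
  have "ln (\<Sum>k<K. w k * exp (A k p')) - ln (\<Sum>k<K. w k * exp (A k p))
          - (ln (\<Sum>k<K. w k * exp (B k p')) - ln (\<Sum>k<K. w k * exp (B k p)))
        \<le> exp (2 * (2 * tau * M)) * (tau * Dl * eta + (exp (2 * (tau * min Dl (2 * M))) - 1) * (tau * M * eta))"
  proof (rule ln_sum_exp_second_diff_le[OF w])
    fix k assume k: "k < K"
    have A_diff: "\<bar>A k p' - A k p\<bar> \<le> tau * M * eta"
      unfolding A_def eta_def using scaled[OF k] by (intro abs_sum_mult_diff_le) simp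
    show B_diff: "\<bar>B k p' - B k p\<bar> \<le> tau * M * eta"
      unfolding B_def eta_def using scaled[OF k] by (intro abs_sum_mult_diff_le) simp
    have "tau * M * eta \<le> tau * M * 2"
      using eta tau \<open>0 \<le> M\<close> by (intro mult_left_mono) auto
    then have "tau * M * eta \<le> 2 * tau * M"
      by simp
    then show "\<bar>A k p' - A k p\<bar> \<le> 2 * tau * M" "\<bar>B k p' - B k p\<bar> \<le> 2 * tau * M"
      using A_diff B_diff by linarith+
    have "(A k p' - A k p) - (B k p' - B k p)
            = (\<Sum>u\<in>UNIV. p' u * (- tau * Qa k u - - tau * Qb k u))
              - (\<Sum>u\<in>UNIV. p u * (- tau * Qa k u - - tau * Qb k u))"
      by (simp add: A_def B_def right_diff_distrib sum_subtractf sum_negf)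
    then show "\<bar>(A k p' - A k p) - (B k p' - B k p)\<bar> \<le> tau * Dl * eta"
      using abs_sum_mult_diff_le[of "\<lambda>u. - tau * Qa k u - - tau * Qb k u" "tau * Dl" p' p] scaled[OF k]
      unfolding eta_def by presburger
    show "\<bar>A k p - B k p\<bar> \<le> tau * min Dl (2 * M)"
      using abs_expectation_diff_le[of p "\<lambda>u. - tau * Qa k u" "\<lambda>u. - tau * Qb k u" "tau * Dl"]
        abs_expectation_le[of p "\<lambda>u. - tau * Qa k u" "tau * M"]
        abs_expectation_le[of p "\<lambda>u. - tau * Qb k u" "tau * M"] p scaled[OF k]
      by (auto simp: A_def B_def abs_le_iff min_def)
  qed
  also have "\<dots> \<le> tau * (entropic_sensitivity tau M * Dl * eta)"
    using tau \<open>0 \<le> M\<close> \<open>0 \<le> Dl\<close> eta(1) by (rule entropic_sensitivity_bound)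
  finally have "tau * ((entropic_cost tau K w Qa p' - entropic_cost tau K w Qa p)
                      - (entropic_cost tau K w Qb p' - entropic_cost tau K w Qb p))
               \<le> tau * (entropic_sensitivity tau M * Dl * eta)"
    using tau unfolding entropic_cost_def A_def B_def by (simp add: algebra_simps sum_distrib_left)
  then show ?thesis
    using tau by (simp add: eta_def abs_minus_commute)
qed

lemma regularized_minimizer_unique:
  fixes nu g :: "('u::finite \<Rightarrow> real) \<Rightarrow> real"
  assumes sc: "strongly_convex_simplex m nu" and m: "m > 0" and alpha: "alpha > 0"
    and g: "midpoint_convex_pdist g"
    and p1: "pdist p1" and min1: "\<And>q. pdist q \<Longrightarrow> g p1 + alpha * nu p1 \<le> g q + alpha * nu q"
    and p2: "pdist p2" and min2: "\<And>q. pdist q \<Longrightarrow> g p2 + alpha * nu p2 \<le> g q + alpha * nu q"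
  shows "p1 = p2"
proof -
  have "alpha * m / 2 * (\<Sum>u\<in>UNIV. (p1 u - p2 u)^2) \<le> 0"
    using regularized_minimizers_close[OF sc _ g g p1 min1 p2 min2] alpha by simp
  then have "(\<Sum>u\<in>UNIV. (p1 u - p2 u)^2) = 0"
    using alpha m sum_nonneg[of UNIV "\<lambda>u. (p1 u - p2 u)^2"] by (simp add: mult_le_0_iff)
  then show ?thesis
    by (simp add: sum_nonneg_eq_0_iff fun_eq_iff)
qed

lemma l1_dist_le_of_sq_dist_le:
  fixes p q :: "'u::finite \<Rightarrow> real"
  assumes a: "0 < a" and C: "0 \<le> C"
    and le: "a * (\<Sum>u\<in>UNIV. (p u - q u)\<^sup>2) \<le> C * (\<Sum>u\<in>UNIV. \<bar>p u - q u\<bar>)"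
  shows "(\<Sum>u\<in>UNIV. \<bar>p u - q u\<bar>) \<le> real CARD('u) * C / a"
proof -
  define eta where "eta = (\<Sum>u\<in>UNIV. \<bar>p u - q u\<bar>)"
  have "eta\<^sup>2 \<le> real CARD('u) * (\<Sum>u\<in>UNIV. (p u - q u)\<^sup>2)"
    using Cauchy_Schwarz_ineq_sum[of "\<lambda>u. \<bar>p u - q u\<bar>" "\<lambda>_. 1" UNIV]
    by (simp add: eta_def mult.commute)
  then have "a * eta\<^sup>2 \<le> real CARD('u) * (a * (\<Sum>u\<in>UNIV. (p u - q u)\<^sup>2))"
    using a by (simp add: mult_left_mono mult.left_commute)
  also have "\<dots> \<le> real CARD('u) * (C * eta)"
    using le by (simp add: eta_def mult_left_mono)
  finally have "(a * eta) * eta \<le> (real CARD('u) * C) * eta"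
    by (simp add: power2_eq_square mult_ac)
  moreover have "0 \<le> eta"
    by (simp add: eta_def sum_nonneg)
  ultimately have "a * eta \<le> real CARD('u) * C"
    using C by (cases "eta = 0") (auto simp: mult_le_cancel_right)
  then show ?thesis
    using a by (simp add: eta_def field_simps)
qed

lemma regularized_minimizer_dtv_le:
  fixes Qa Qb :: "nat \<Rightarrow> 'u::finite \<Rightarrow> real" and w :: "nat \<Rightarrow> real" and nu :: "('u \<Rightarrow> real) \<Rightarrow> real"
  assumes sc: "strongly_convex_simplex m nu" and m: "m > 0" and alpha: "alpha > 0"
    and tau: "tau > 0" and w: "\<And>k. k < K \<Longrightarrow> 0 \<le> w k" "(\<Sum>k<K. w k) = 1"
    and Ma: "\<And>k u. k < K \<Longrightarrow> \<bar>Qa k u\<bar> \<le> M" and Mb: "\<And>k u. k < K \<Longrightarrow> \<bar>Qb k u\<bar> \<le> M"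
    and Dl: "\<And>k u. k < K \<Longrightarrow> \<bar>Qa k u - Qb k u\<bar> \<le> Dl"
    and p: "pdist p"
    and min_p: "\<And>q. pdist q \<Longrightarrow> entropic_cost tau K w Qa p + alpha * nu p \<le> entropic_cost tau K w Qa q + alpha * nu q"
    and p': "pdist p'"
    and min_p': "\<And>q. pdist q \<Longrightarrow> entropic_cost tau K w Qb p' + alpha * nu p' \<le> entropic_cost tau K w Qb q + alpha * nu q"
  shows "dtv p p' \<le> real CARD('u) * entropic_sensitivity tau M * Dl / (alpha * m)"
proof -
  have convex: "midpoint_convex_pdist (entropic_cost tau K w Q)" for Q
    by (rule entropic_cost_midpoint_convex[OF tau w])
  have "alpha * m / 2 * (\<Sum>u\<in>UNIV. (p u - p' u)\<^sup>2)
          \<le> (entropic_cost tau K w Qa p' - entropic_cost tau K w Qa p)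
              - (entropic_cost tau K w Qb p' - entropic_cost tau K w Qb p)"
    using alpha by (intro regularized_minimizers_close[OF sc _ convex convex p min_p p' min_p']) simp
  also have "\<dots> \<le> entropic_sensitivity tau M * Dl * (\<Sum>u\<in>UNIV. \<bar>p u - p' u\<bar>)"
    by (rule entropic_cost_second_diff_le[OF tau w p p' Ma Mb Dl])
  finally have le: "alpha * m / 2 * (\<Sum>u\<in>UNIV. (p u - p' u)\<^sup>2)
                      \<le> entropic_sensitivity tau M * Dl * (\<Sum>u\<in>UNIV. \<bar>p u - p' u\<bar>)" .
  obtain k where "k < K" using w(2) by (cases K) auto
  then have "0 \<le> M" "0 \<le> Dl"
    using Ma[of k undefined] Dl[of k undefined] by linarith+
  then have "0 \<le> entropic_sensitivity tau M * Dl"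
    using tau by (simp add: entropic_sensitivity_def)
  then have "(\<Sum>u\<in>UNIV. \<bar>p u - p' u\<bar>) \<le> real CARD('u) * (entropic_sensitivity tau M * Dl) / (alpha * m / 2)"
    using alpha m le by (intro l1_dist_le_of_sq_dist_le) auto
  then show ?thesis
    using alpha m by (simp add: dtv_def field_simps)
qed

lemma regularized_minimizer_exists:
  fixes Q :: "nat \<Rightarrow> 'u::finite \<Rightarrow> real" and w :: "nat \<Rightarrow> real" and nu :: "('u \<Rightarrow> real) \<Rightarrow> real"
  assumes nu_cont: "continuous_on {p. pdist p} nu"
    and w: "\<And>k. k < K \<Longrightarrow> 0 \<le> w k" "(\<Sum>k<K. w k) = 1"
  shows "\<exists>q. pdist q \<and>
           (\<forall>q'. pdist q' \<longrightarrow> entropic_cost tau K w Q q + alpha * nu q \<le> entropic_cost tau K w Q q' + alpha * nu q')"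
proof -
  have "continuous_on {p. pdist p} (entropic_cost tau K w Q)"
    unfolding entropic_cost_def
  proof (intro continuous_intros)
    show "\<forall>q\<in>{p. pdist p}. (\<Sum>k<K. w k * exp (- tau * (\<Sum>u\<in>UNIV. q u * Q k u))) \<noteq> 0"
      using weighted_exp_sum_pos[OF w] by (metis less_irrefl)
    show "continuous_on {p. pdist p} (\<lambda>q. q u)" for u
      by (rule continuous_on_subset[OF continuous_on_product_coordinates]) simp
  qed
  then have "continuous_on {p. pdist p} (\<lambda>q. entropic_cost tau K w Q q + alpha * nu q)"
    by (intro continuous_intros nu_cont)
  moreover have "{p::'u \<Rightarrow> real. pdist p} \<noteq> {}"
    using pdist_uniform by blast
  ultimately show ?thesis
    using continuous_attains_inf[OF compact_pdist] by blast
qed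

section \<open>Best responses\<close>

lemma Qrem_cong_later:
  "(\<And>s. t < s \<Longrightarrow> pol s = pol' s) \<Longrightarrow> Qrem f r pol mu n t = Qrem f r pol' mu n t"
proof (induction n arbitrary: t)
  case (Suc n)
  then have "Qrem f r pol mu n (Suc t) = Qrem f r pol' mu n (Suc t)" and "pol (Suc t) = pol' (Suc t)"
    by auto
  then show ?case by (simp add: fun_eq_iff)
qed (simp add: fun_eq_iff)

lemma Qfun_cong_later:
  "(\<And>s. t < s \<Longrightarrow> pol s = pol' s) \<Longrightarrow> Qfun T f r pol mu t = Qfun T f r pol' mu t"
  unfolding Qfun_def by (rule Qrem_cong_later)

locale risk_averse_game =
  fixes T K :: nat
    and f :: "nat \<Rightarrow> 'x::finite \<Rightarrow> 'u::finite \<Rightarrow> ('x \<Rightarrow> real) \<Rightarrow> 'x \<Rightarrow> real"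
    and r :: "nat \<Rightarrow> 'x \<Rightarrow> 'u \<Rightarrow> ('x \<Rightarrow> real) \<Rightarrow> real"
    and w :: "nat \<Rightarrow> real"
    and nu :: "('u \<Rightarrow> real) \<Rightarrow> real"
    and tau m :: real
  assumes w_nonneg: "\<And>k. k < K \<Longrightarrow> 0 \<le> w k"
    and w_sum: "(\<Sum>k<K. w k) = 1"
    and tau: "tau > 0"
    and m: "m > 0"
    and nu_sc: "strongly_convex_simplex m nu"
    and nu_cont: "continuous_on {p. pdist p} nu"
begin

lemmas w = w_nonneg w_sum

text \<open>The cost \<open>c\<^sub>t\<close> at state \<open>x\<close> as a function of the action distribution \<open>q\<close> played there;
  it depends on the policy only through its components after time \<open>t\<close>.\<close>

definition stage_cost ::
  "real \<Rightarrow> (nat \<Rightarrow> 'x \<Rightarrow> 'u \<Rightarrow> real) \<Rightarrow> (nat \<Rightarrow> nat \<Rightarrow> 'x \<Rightarrow> real) \<Rightarrow> nat \<Rightarrow> 'x \<Rightarrow> ('u \<Rightarrow> real) \<Rightarrow> real"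
  where "stage_cost alpha pol S t x q =
           entropic_cost tau K w (\<lambda>k u. Qfun T f r pol (S k) t x u) q + alpha * nu q"

definition stage_optimal ::
  "real \<Rightarrow> (nat \<Rightarrow> nat \<Rightarrow> 'x \<Rightarrow> real) \<Rightarrow> (nat \<Rightarrow> 'x \<Rightarrow> 'u \<Rightarrow> real) \<Rightarrow> nat \<Rightarrow> bool"
  where "stage_optimal alpha S pol t \<longleftrightarrow>
           (\<forall>x q. pdist q \<longrightarrow> stage_cost alpha pol S t x (pol t x) \<le> stage_cost alpha pol S t x q)"

lemma stage_cost_cong_later:
  "(\<And>s. t < s \<Longrightarrow> pol s = pol' s) \<Longrightarrow> stage_cost alpha pol S t = stage_cost alpha pol' S t"
  unfolding stage_cost_def using Qfun_cong_later[of t pol pol' T f r] by presburger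

lemma stage_cost_fun_upd_self [simp]:
  "stage_cost alpha (pol(t := p)) S t = stage_cost alpha pol S t"
  by (rule stage_cost_cong_later) simp

lemma rq_cost_eq_stage_cost:
  "rq_cost T f r K w tau alpha nu pol S t x = stage_cost alpha pol S t x (pol t x)"
  by (simp add: rq_cost_def stage_cost_def entropic_cost_def)

lemma is_opt_resp_iff_stage_optimal:
  "is_opt_resp T f r K w tau alpha nu S pol \<longleftrightarrow> is_policy T pol \<and> (\<forall>t<T. stage_optimal alpha S pol t)"
proof (cases "is_policy T pol")
  case True
  have "(\<forall>p. (\<forall>y. pdist (p y)) \<longrightarrow> stage_cost alpha pol S t x (pol t x) \<le> stage_cost alpha pol S t x (p x))
          \<longleftrightarrow> (\<forall>q. pdist q \<longrightarrow> stage_cost alpha pol S t x (pol t x) \<le> stage_cost alpha pol S t x q)"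
    if "t < T" for t x
  proof safe
    fix q :: "'u \<Rightarrow> real"
    assume "\<forall>p. (\<forall>y. pdist (p y)) \<longrightarrow> stage_cost alpha pol S t x (pol t x) \<le> stage_cost alpha pol S t x (p x)"
      and "pdist q"
    then show "stage_cost alpha pol S t x (pol t x) \<le> stage_cost alpha pol S t x q"
      using True that by (auto simp: is_policy_def dest!: spec[of _ "(pol t)(x := q)"])
  qed blast
  then show ?thesis
    by (simp add: is_opt_resp_def stage_optimal_def rq_cost_eq_stage_cost)
qed (simp add: is_opt_resp_def)

lemma stage_optimal_cong_from:
  "(\<And>s. t \<le> s \<Longrightarrow> pol' s = pol s) \<Longrightarrow> stage_optimal alpha S pol' t \<longleftrightarrow> stage_optimal alpha S pol t"
  using stage_cost_cong_later[of t pol' pol alpha S] by (simp add: stage_optimal_def)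

lemma stage_optimal_fun_upd_exists:
  assumes pol: "is_policy T pol" and t: "t < T"
  shows "\<exists>sig. is_policy T (pol(t := sig)) \<and> stage_optimal alpha S (pol(t := sig)) t"
proof -
  have "\<forall>x. \<exists>q. pdist q \<and> (\<forall>q'. pdist q' \<longrightarrow> stage_cost alpha pol S t x q \<le> stage_cost alpha pol S t x q')"
    unfolding stage_cost_def using regularized_minimizer_exists[OF nu_cont w] by blast
  then obtain sig where "\<And>x. pdist (sig x)"
    and "\<And>x q. pdist q \<Longrightarrow> stage_cost alpha pol S t x (sig x) \<le> stage_cost alpha pol S t x q"
    by (metis choice)
  then show ?thesis
    using pol t by (intro exI[of _ sig]) (auto simp: is_policy_def stage_optimal_def)
qed

lemma is_opt_resp_exists: "\<exists>pol. is_opt_resp T f r K w tau alpha nu S pol"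
proof -
  have "\<exists>pol. is_policy T pol \<and> (\<forall>t. T - n \<le> t \<longrightarrow> t < T \<longrightarrow> stage_optimal alpha S pol t)" for n
  proof (induction n)
    case 0
    have "is_policy T (\<lambda>t (x::'x) (u::'u). if t < T then 1 / real CARD('u) else 0)"
      using pdist_uniform[where 'u = 'u] by (auto simp: is_policy_def)
    then show ?case by auto
  next
    case (Suc n)
    then obtain pol where pol: "is_policy T pol"
      and opt: "\<And>t. T - n \<le> t \<Longrightarrow> t < T \<Longrightarrow> stage_optimal alpha S pol t"
      by blast
    show ?case
    proof (cases "n < T")
      case True
      define t0 where "t0 = T - Suc n"
      obtain sig where pol': "is_policy T (pol(t0 := sig))" and opt_t0: "stage_optimal alpha S (pol(t0 := sig)) t0"
        using stage_optimal_fun_upd_exists[OF pol, of t0] True by (auto simp: t0_def)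
      have "stage_optimal alpha S (pol(t0 := sig)) t" if "T - Suc n \<le> t" "t < T" for t
      proof (cases "t = t0")
        case False
        then have "stage_optimal alpha S pol t"
          using opt that by (simp add: t0_def)
        then show ?thesis
          using False that by (subst stage_optimal_cong_from) (auto simp: t0_def)
      qed (use opt_t0 in simp)
      with pol' show ?thesis by blast
    qed (use pol opt in auto)
  qed
  from this[of T] show ?thesis
    by (auto simp: is_opt_resp_iff_stage_optimal)
qed

lemma is_opt_resp_unique:
  assumes alpha: "alpha > 0"
    and opt1: "is_opt_resp T f r K w tau alpha nu S pol1"
    and opt2: "is_opt_resp T f r K w tau alpha nu S pol2"
  shows "pol1 = pol2"
proof -
  have pol1: "is_policy T pol1" and stage1: "\<And>t. t < T \<Longrightarrow> stage_optimal alpha S pol1 t"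
    and pol2: "is_policy T pol2" and stage2: "\<And>t. t < T \<Longrightarrow> stage_optimal alpha S pol2 t"
    using opt1 opt2 by (auto simp: is_opt_resp_iff_stage_optimal)
  have "\<forall>t. T - n \<le> t \<longrightarrow> pol1 t = pol2 t" for n
  proof (induction n)
    case 0
    then show ?case using pol1 pol2 by (simp add: is_policy_def)
  next
    case (Suc n)
    show ?case
    proof (intro allI impI)
      fix t assume t: "T - Suc n \<le> t"
      show "pol1 t = pol2 t"
      proof (cases "T - n \<le> t")
        case False
        then have "t < T" by linarith
        have same_cost: "stage_cost alpha pol2 S t = stage_cost alpha pol1 S t"
          using Suc.IH t False by (intro stage_cost_cong_later) auto
        show ?thesis
        proof
          fix x
          show "pol1 t x = pol2 t x"
            using stage1[OF \<open>t < T\<close>] stage2[OF \<open>t < T\<close>] pol1 pol2 \<open>t < T\<close>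
            unfolding stage_optimal_def same_cost stage_cost_def is_policy_def
            by (intro regularized_minimizer_unique[OF nu_sc m alpha entropic_cost_midpoint_convex[OF tau w]])
              auto
        qed
      qed (use Suc.IH in blast)
    qed
  qed
  from this[of T] show ?thesis by auto
qed

lemma B_opt_is_opt_resp:
  assumes "alpha > 0"
  shows "is_opt_resp T f r K w tau alpha nu S (B_opt T f r K w tau alpha nu S)"
proof -
  have "\<exists>!pol. is_opt_resp T f r K w tau alpha nu S pol"
    using is_opt_resp_exists is_opt_resp_unique[OF assms] by blast
  then show ?thesis
    unfolding B_opt_def by (rule theI')
qed

lemma B_opt_policy: "alpha > 0 \<Longrightarrow> is_policy T (B_opt T f r K w tau alpha nu S)"
  using B_opt_is_opt_resp by (simp add: is_opt_resp_def)

end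

section \<open>The policy metric and RQ-Fictitious Play\<close>

lemma dtv_le_dPi: "t < T \<Longrightarrow> dtv (p t x) (q t x) \<le> dPi T p q"
  unfolding dPi_def by (rule Max_ge) auto

lemma dPi_le:
  assumes "T \<ge> 1" "\<And>t x. t < T \<Longrightarrow> dtv (p t x) (q t x) \<le> c"
  shows "dPi T p q \<le> c"
  unfolding dPi_def using assms by (subst Max_le_iff) (auto simp: lessThan_empty_iff)

lemma dPi_nonneg: "T \<ge> 1 \<Longrightarrow> 0 \<le> dPi T p q"
  using dtv_le_dPi[of 0 T p undefined q] dtv_nonneg[of "p 0 undefined" "q 0 undefined"] by simp

lemma dPi_commute: "dPi T p q = dPi T q p"
  by (simp add: dPi_def dtv_commute)

lemma dPi_triangle: "T \<ge> 1 \<Longrightarrow> dPi T p r \<le> dPi T p q + dPi T q r"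
proof (rule dPi_le)
  fix t x assume "t < T"
  then show "dtv (p t x) (r t x) \<le> dPi T p q + dPi T q r"
    using dtv_triangle[of "p t x" "r t x" "q t x"] dtv_le_dPi[of t T p x q] dtv_le_dPi[of t T q x r]
    by linarith
qed

lemma dPi_le_1: "T \<ge> 1 \<Longrightarrow> is_policy T p \<Longrightarrow> is_policy T q \<Longrightarrow> dPi T p q \<le> 1"
  by (rule dPi_le) (auto simp: is_policy_def intro: dtv_le_1)

lemma dPi_le_0_imp_eq:
  assumes "T \<ge> 1" "is_policy T p" "is_policy T q" "dPi T p q \<le> 0"
  shows "p = q"
proof -
  have "p t x = q t x" for t x
  proof (cases "t < T")
    case True
    then show ?thesis
      using dtv_le_dPi[OF True, of p x q] assms(4) by (intro dtv_le_0_imp_eq) linarith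
  next
    case False
    then show ?thesis
      using assms(2,3) by (simp add: is_policy_def)
  qed
  then show ?thesis by (intro ext) simp
qed

lemma geometric_increments_converge:
  fixes a :: "nat \<Rightarrow> real"
  assumes step: "\<And>j. \<bar>a (Suc j) - a j\<bar> \<le> C * c ^ j" and c: "0 \<le> c" "c < 1"
  shows "\<exists>l. a \<longlonglongrightarrow> l \<and> (\<forall>j. \<bar>l - a j\<bar> \<le> C * c ^ j / (1 - c))"
proof -
  define E where "E j = C * c ^ j / (1 - c)" for j
  have far: "\<bar>a (j + n) - a j\<bar> \<le> C * c ^ j * (1 - c ^ n) / (1 - c)" for j n
  proof (induction n)
    case (Suc n)
    have "\<bar>a (j + Suc n) - a j\<bar> \<le> \<bar>a (j + n) - a j\<bar> + \<bar>a (Suc (j + n)) - a (j + n)\<bar>"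
      by simp
    also have "\<dots> \<le> C * c ^ j * (1 - c ^ n) / (1 - c) + C * c ^ (j + n)"
      using Suc.IH step by (rule add_mono)
    also have "\<dots> = C * c ^ j * (1 - c ^ Suc n) / (1 - c)"
      using c by (simp add: field_simps power_add)
    finally show ?case .
  qed simp
  have "0 \<le> C" using step[of 0] by (simp add: abs_le_iff)
  have far_E: "\<bar>a (j + n) - a j\<bar> \<le> E j" for j n
  proof -
    have "C * c ^ j * (1 - c ^ n) \<le> C * c ^ j"
      using \<open>0 \<le> C\<close> c by (simp add: mult_left_le)
    then show ?thesis
      using far[of j n] c unfolding E_def by (smt (verit) divide_right_mono)
  qed
  have E_lim: "E \<longlonglongrightarrow> 0"
    unfolding E_def using c by (intro tendsto_eq_intros LIMSEQ_power_zero) auto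
  have "Cauchy a"
  proof (rule metric_CauchyI)
    fix e :: real assume "0 < e"
    then obtain M where M: "E M < e / 2"
      using E_lim by (metis half_gt_zero order_tendstoD(2) eventually_sequentially order_refl)
    have "\<bar>a m - a n\<bar> < e" if "M \<le> m" "M \<le> n" for m n
      using far_E[of M "m - M"] far_E[of M "n - M"] M that by simp
    then show "\<exists>M. \<forall>m\<ge>M. \<forall>n\<ge>M. dist (a m) (a n) < e"
      by (auto simp: dist_real_def)
  qed
  then obtain l where l: "a \<longlonglongrightarrow> l"
    by (auto simp: Cauchy_convergent_iff convergent_def)
  have "\<bar>l - a j\<bar> \<le> E j" for j
  proof (rule LIMSEQ_le_const2)
    show "(\<lambda>n. \<bar>a (n + j) - a j\<bar>) \<longlonglongrightarrow> \<bar>l - a j\<bar>"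
      by (intro tendsto_intros LIMSEQ_ignore_initial_segment l)
  qed (intro exI[of _ 0] allI impI, metis far_E add.commute)
  with l show ?thesis
    unfolding E_def by blast
qed

lemma pdist_limit:
  fixes p :: "nat \<Rightarrow> 'a::finite \<Rightarrow> real"
  assumes p: "\<And>j. pdist (p j)" and lim: "\<And>u. (\<lambda>j. p j u) \<longlonglongrightarrow> q u"
  shows "pdist q"
proof -
  have "0 \<le> q u" for u
    using p by (intro LIMSEQ_le_const[OF lim]) (auto simp: pdist_def)
  moreover have "(\<lambda>j. sum (p j) UNIV) \<longlonglongrightarrow> sum q UNIV"
    by (intro tendsto_sum lim)
  then have "sum q UNIV = 1"
    using p by (simp add: pdist_def LIMSEQ_const_iff)
  ultimately show ?thesis
    by (simp add: pdist_def)
qed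

lemma policy_geometric_limit:
  fixes a :: "nat \<Rightarrow> nat \<Rightarrow> 'x::finite \<Rightarrow> 'u::finite \<Rightarrow> real"
  assumes T: "T \<ge> 1" and a: "\<And>j. is_policy T (a j)"
    and step: "\<And>j. dPi T (a j) (a (Suc j)) \<le> c ^ j" and c: "0 \<le> c" "c < 1"
  shows "\<exists>pstar. is_policy T pstar \<and> (\<lambda>j. dPi T (a j) pstar) \<longlonglongrightarrow> 0"
proof -
  define pstar where "pstar t x u = (if t < T then lim (\<lambda>j. a j t x u) else 0)" for t x u
  have conv: "(\<lambda>j. a j t x u) \<longlonglongrightarrow> pstar t x u"
    and close: "\<And>j. \<bar>pstar t x u - a j t x u\<bar> \<le> 2 * c ^ j / (1 - c)"
    if "t < T" for t x u
  proof -
    have "\<bar>a (Suc j) t x u - a j t x u\<bar> \<le> 2 * c ^ j" for j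
      using abs_diff_le_dtv[of "a (Suc j) t x" u "a j t x"] dtv_le_dPi[OF that, of "a j" x "a (Suc j)"]
        step[of j] dtv_commute[of "a (Suc j) t x" "a j t x"] by linarith
    then obtain l where l: "(\<lambda>j. a j t x u) \<longlonglongrightarrow> l" "\<And>j. \<bar>l - a j t x u\<bar> \<le> 2 * c ^ j / (1 - c)"
      using geometric_increments_converge[of "\<lambda>j. a j t x u" 2 c] c by blast
    moreover have "pstar t x u = l"
      using that limI[OF l(1)] by (simp add: pstar_def)
    ultimately show "(\<lambda>j. a j t x u) \<longlonglongrightarrow> pstar t x u" "\<And>j. \<bar>pstar t x u - a j t x u\<bar> \<le> 2 * c ^ j / (1 - c)"
      by simp_all
  qed
  have "pdist (pstar t x)" if "t < T" for t x
  proof (rule pdist_limit)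
    show "pdist (a j t x)" for j
      using a[of j] that by (simp add: is_policy_def)
  qed (rule conv[OF that])
  moreover have "pstar t = (\<lambda>_ _. 0)" if "T \<le> t" for t
    using that by (simp add: pstar_def fun_eq_iff)
  ultimately have "is_policy T pstar"
    by (simp add: is_policy_def)
  moreover have "(\<lambda>j. dPi T (a j) pstar) \<longlonglongrightarrow> 0"
  proof (rule real_tendsto_sandwich[of "\<lambda>_. 0" _ _ "\<lambda>j. real CARD('u) * (c ^ j / (1 - c))"])
    have "dtv (a j t x) (pstar t x) \<le> real CARD('u) * (c ^ j / (1 - c))" if "t < T" for j t x
    proof -
      have "(\<Sum>u\<in>UNIV. \<bar>a j t x u - pstar t x u\<bar>) \<le> (\<Sum>u\<in>(UNIV::'u set). 2 * (c ^ j / (1 - c)))"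
        using close[OF that] by (intro sum_mono) (simp add: abs_minus_commute)
      also have "\<dots> = 2 * (real CARD('u) * (c ^ j / (1 - c)))"
        by simp
      finally show ?thesis
        unfolding dtv_def by linarith
    qed
    then show "\<forall>\<^sub>F j in sequentially. dPi T (a j) pstar \<le> real CARD('u) * (c ^ j / (1 - c))"
      by (intro always_eventually allI dPi_le[OF T])
    show "(\<lambda>j. real CARD('u) * (c ^ j / (1 - c))) \<longlonglongrightarrow> 0"
      using c by (intro tendsto_eq_intros LIMSEQ_power_zero) auto
  qed (use dPi_nonneg[OF T] in \<open>auto intro: always_eventually\<close>)
  ultimately show ?thesis by blast
qed

lemma contraction_iterates_converge:
  fixes G :: "(nat \<Rightarrow> 'x::finite \<Rightarrow> 'u::finite \<Rightarrow> real) \<Rightarrow> (nat \<Rightarrow> 'x \<Rightarrow> 'u \<Rightarrow> real)"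
  assumes T: "T \<ge> 1" and G_policy: "\<And>p. is_policy T p \<Longrightarrow> is_policy T (G p)"
    and G_contr: "\<And>p q. is_policy T p \<Longrightarrow> is_policy T q \<Longrightarrow> dPi T (G p) (G q) \<le> c * dPi T p q"
    and c: "0 \<le> c" "c < 1" and p0: "is_policy T p0"
  shows "\<exists>pstar. is_policy T pstar \<and> G pstar = pstar \<and> (\<lambda>j. dPi T ((G ^^ j) p0) pstar) \<longlonglongrightarrow> 0"
proof -
  define a where "a j = (G ^^ j) p0" for j
  have a: "is_policy T (a j)" for j
    by (induction j) (simp_all add: a_def p0 G_policy)
  have a_Suc: "a (Suc j) = G (a j)" for j
    by (simp add: a_def)
  have steps: "dPi T (a j) (a (Suc j)) \<le> c ^ j" for j
  proof (induction j)
    case 0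
    then show ?case using dPi_le_1[OF T a a] by simp
  next
    case (Suc j)
    have "dPi T (a (Suc j)) (a (Suc (Suc j))) \<le> c * dPi T (a j) (a (Suc j))"
      unfolding a_Suc[of "Suc j"] unfolding a_Suc[of j] by (rule G_contr[OF a a[of "Suc j", unfolded a_Suc]])
    also have "\<dots> \<le> c * c ^ j"
      using Suc.IH c(1) by (rule mult_left_mono)
    finally show ?case by simp
  qed
  obtain pstar where pstar: "is_policy T pstar" and lim: "(\<lambda>j. dPi T (a j) pstar) \<longlonglongrightarrow> 0"
    using policy_geometric_limit[of T a c] T a steps c by blast
  have "dPi T (G pstar) pstar \<le> c * dPi T (a j) pstar + dPi T (a (Suc j)) pstar" for j
  proof -
    have "dPi T (G pstar) pstar \<le> dPi T (G pstar) (G (a j)) + dPi T (G (a j)) pstar"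
      by (rule dPi_triangle[OF T])
    moreover have "dPi T (G pstar) (G (a j)) \<le> c * dPi T (a j) pstar"
      using G_contr[OF pstar a] by (simp add: dPi_commute)
    ultimately show ?thesis
      by (simp add: a_Suc)
  qed
  moreover have "(\<lambda>j. c * dPi T (a j) pstar + dPi T (a (Suc j)) pstar) \<longlonglongrightarrow> c * 0 + 0"
    by (intro tendsto_intros lim LIMSEQ_Suc)
  ultimately have "dPi T (G pstar) pstar \<le> 0"
    by (intro LIMSEQ_le_const[of _ 0]) auto
  then have "G pstar = pstar"
    by (rule dPi_le_0_imp_eq[OF T G_policy[OF pstar] pstar])
  with pstar lim show ?thesis
    unfolding a_def by blast
qed

definition fictitious_play_step ::
  "((nat \<Rightarrow> 'x \<Rightarrow> 'u \<Rightarrow> real) \<Rightarrow> (nat \<Rightarrow> 'x \<Rightarrow> 'u \<Rightarrow> real)) \<Rightarrow> real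
     \<Rightarrow> (nat \<Rightarrow> 'x \<Rightarrow> 'u \<Rightarrow> real) \<Rightarrow> (nat \<Rightarrow> 'x \<Rightarrow> 'u \<Rightarrow> real)"
  where "fictitious_play_step Phi beta p = (\<lambda>t x u. beta * p t x u + (1 - beta) * Phi p t x u)"

lemma is_policy_fictitious_play_step:
  "is_policy T p \<Longrightarrow> is_policy T (Phi p) \<Longrightarrow> 0 \<le> beta \<Longrightarrow> beta \<le> 1
     \<Longrightarrow> is_policy T (fictitious_play_step Phi beta p)"
  unfolding is_policy_def fictitious_play_step_def by (auto intro: pdist_convex_comb)

lemma dPi_fictitious_play_step_le:
  assumes T: "T \<ge> 1" and beta: "0 \<le> beta" "beta \<le> 1"
  shows "dPi T (fictitious_play_step Phi beta p) (fictitious_play_step Phi beta q)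
           \<le> beta * dPi T p q + (1 - beta) * dPi T (Phi p) (Phi q)"
proof (rule dPi_le[OF T])
  fix t x assume "t < T"
  then have "beta * dtv (p t x) (q t x) + (1 - beta) * dtv (Phi p t x) (Phi q t x)
               \<le> beta * dPi T p q + (1 - beta) * dPi T (Phi p) (Phi q)"
    using beta by (intro add_mono mult_left_mono dtv_le_dPi) auto
  then show "dtv (fictitious_play_step Phi beta p t x) (fictitious_play_step Phi beta q t x)
               \<le> beta * dPi T p q + (1 - beta) * dPi T (Phi p) (Phi q)"
    unfolding fictitious_play_step_def using dtv_convex_comb_le[OF beta] by (rule order_trans[rotated])
qed

lemma normalize_pol_policy:
  assumes "is_policy T p"
  shows "normalize_pol p = p"
proof (intro ext)
  fix t x u
  show "normalize_pol p t x u = p t x u"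
    using assms by (cases "t < T") (auto simp: normalize_pol_def is_policy_def pdist_def)
qed

lemma normalize_pol_scale: "normalize_pol (\<lambda>t x u. c * p t x u) = normalize_pol p" if "c \<noteq> 0"
  using that by (simp add: normalize_pol_def fun_eq_iff flip: sum_distrib_left)

text \<open>Normalizing a convex combination of two policies changes nothing, so after the first step
  (whose running average is still \<open>0\<close>) RQ-Fictitious Play is plain averaging with \<open>\<Phi>\<close>.\<close>

lemma rqfp_fst_Suc:
  assumes pi0: "is_policy T pi0" and Phi: "\<And>p. is_policy T p \<Longrightarrow> is_policy T (Phi p)"
    and beta: "0 \<le> beta" "beta < 1"
  shows "fst (rqfp Phi beta pi0 (Suc j)) = (fictitious_play_step Phi beta ^^ j) pi0"
proof (induction j)
  case 0
  show ?case
    using beta normalize_pol_scale[of "1 - beta" pi0] normalize_pol_policy[OF pi0] by simp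
next
  case (Suc j)
  have "is_policy T ((fictitious_play_step Phi beta ^^ n) pi0)" for n
    using beta by (induction n) (auto intro: is_policy_fictitious_play_step pi0 Phi)
  then have "normalize_pol ((fictitious_play_step Phi beta ^^ Suc j) pi0) = (fictitious_play_step Phi beta ^^ Suc j) pi0"
    by (rule normalize_pol_policy)
  moreover have "fst (rqfp Phi beta pi0 (Suc (Suc j)))
                   = normalize_pol (fictitious_play_step Phi beta (fst (rqfp Phi beta pi0 (Suc j))))"
    by (simp only: rqfp.simps Let_def fst_conv snd_conv fictitious_play_step_def)
  ultimately show ?case
    using Suc.IH by simp
qed

lemma fictitious_play_step_fixed_point:
  assumes "fictitious_play_step Phi beta p = p" "beta < 1"
  shows "Phi p = p"
proof (intro ext)
  fix t x u
  have "beta * p t x u + (1 - beta) * Phi p t x u = p t x u"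
    using assms(1) by (simp add: fictitious_play_step_def fun_eq_iff)
  then have "(1 - beta) * Phi p t x u = (1 - beta) * p t x u"
    by (simp add: algebra_simps)
  then show "Phi p t x u = p t x u"
    using assms(2) by simp
qed

text \<open>Averaging with weight \<open>\<beta>\<close> turns the contraction constant \<open>L\<close> of \<open>\<Phi>\<close> into
  \<open>\<beta> + (1 - \<beta>) L < 1\<close>.\<close>

lemma rq_fictitious_play_converges:
  fixes Phi :: "(nat \<Rightarrow> 'x::finite \<Rightarrow> 'u::finite \<Rightarrow> real) \<Rightarrow> (nat \<Rightarrow> 'x \<Rightarrow> 'u \<Rightarrow> real)"
  assumes T: "T \<ge> 1" and Phi_policy: "\<And>p. is_policy T p \<Longrightarrow> is_policy T (Phi p)"
    and Phi_contr: "\<And>p q. is_policy T p \<Longrightarrow> is_policy T q \<Longrightarrow> dPi T (Phi p) (Phi q) \<le> L * dPi T p q"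
    and L: "0 \<le> L" "L < 1" and beta: "0 \<le> beta" "beta < 1" and pi0: "is_policy T pi0"
  shows "\<exists>pistar. is_policy T pistar \<and> Phi pistar = pistar \<and>
           (\<lambda>j. dPi T (fst (rqfp Phi beta pi0 j)) pistar) \<longlonglongrightarrow> 0"
proof -
  define G where "G = fictitious_play_step Phi beta"
  have G_policy: "is_policy T (G p)" if "is_policy T p" for p
    unfolding G_def using that Phi_policy beta by (intro is_policy_fictitious_play_step) auto
  have G_contr: "dPi T (G p) (G q) \<le> (beta + (1 - beta) * L) * dPi T p q"
    if "is_policy T p" "is_policy T q" for p q
  proof -
    have "dPi T (G p) (G q) \<le> beta * dPi T p q + (1 - beta) * dPi T (Phi p) (Phi q)"
      unfolding G_def using beta by (intro dPi_fictitious_play_step_le[OF T]) auto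
    also have "\<dots> \<le> beta * dPi T p q + (1 - beta) * (L * dPi T p q)"
      using Phi_contr[OF that] beta by (intro add_left_mono mult_left_mono) auto
    finally show ?thesis
      by (simp add: algebra_simps)
  qed
  have "(1 - beta) * L < (1 - beta) * 1"
    using L beta by (intro mult_strict_left_mono) auto
  then have "beta + (1 - beta) * L < beta + (1 - beta) * 1"
    by (rule add_strict_left_mono)
  then have c_lt: "beta + (1 - beta) * L < 1"
    by simp
  have c_ge: "0 \<le> beta + (1 - beta) * L"
    using L beta by simp
  obtain pistar where pistar: "is_policy T pistar" "G pistar = pistar"
    and lim: "(\<lambda>j. dPi T ((G ^^ j) pi0) pistar) \<longlonglongrightarrow> 0"
    using contraction_iterates_converge[where G=G and c="beta + (1 - beta) * L",
        OF T G_policy G_contr c_ge c_lt pi0] by blast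
  have rqfp_eq: "fst (rqfp Phi beta pi0 (Suc j)) = (G ^^ j) pi0" for j
    unfolding G_def using beta by (intro rqfp_fst_Suc[where Phi=Phi, OF pi0 Phi_policy]) auto
  have "(\<lambda>j. dPi T (fst (rqfp Phi beta pi0 j)) pistar) \<longlonglongrightarrow> 0"
    by (rule LIMSEQ_imp_Suc) (simp only: rqfp_eq lim)
  moreover have "Phi pistar = pistar"
    using fictitious_play_step_fixed_point[of Phi beta pistar] pistar(2) beta by (simp add: G_def)
  ultimately show ?thesis
    using pistar(1) by blast
qed

section \<open>The mean-field game\<close>

locale mean_field_game = risk_averse_game T K f r w nu tau m
  for T K :: nat
    and f :: "nat \<Rightarrow> 'x::finite \<Rightarrow> 'u::finite \<Rightarrow> ('x \<Rightarrow> real) \<Rightarrow> 'x \<Rightarrow> real"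
    and r :: "nat \<Rightarrow> 'x \<Rightarrow> 'u \<Rightarrow> ('x \<Rightarrow> real) \<Rightarrow> real"
    and w :: "nat \<Rightarrow> real"
    and nu :: "('u \<Rightarrow> real) \<Rightarrow> real"
    and tau m :: real +
  fixes mu0 :: "nat \<Rightarrow> 'x \<Rightarrow> real"
    and Rmax Lf Lr :: real
  assumes T: "T \<ge> 1"
    and f_dist: "\<And>t x u mu. t < T \<Longrightarrow> pdist mu \<Longrightarrow> pdist (f t x u mu)"
    and r_bound: "\<And>t x u mu. t < T \<Longrightarrow> pdist mu \<Longrightarrow> \<bar>r t x u mu\<bar> \<le> Rmax"
    and Lf: "0 \<le> Lf" and Lr: "0 \<le> Lr"
    and f_lip: "\<And>t x u mu mu'. t < T \<Longrightarrow> pdist mu \<Longrightarrow> pdist mu' \<Longrightarrow>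
                  (\<Sum>x'\<in>UNIV. \<bar>f t x u mu x' - f t x u mu' x'\<bar>) \<le> Lf * dtv mu mu'"
    and r_lip: "\<And>t x u mu mu'. t < T \<Longrightarrow> pdist mu \<Longrightarrow> pdist mu' \<Longrightarrow>
                  \<bar>r t x u mu - r t x u mu'\<bar> \<le> Lr * dtv mu mu'"
    and mu0_dist: "\<And>k. k < K \<Longrightarrow> pdist (mu0 k)"
begin

lemma flow_pdist:
  assumes pol: "is_policy T pol" and mu: "pdist mu"
  shows "t \<le> T \<Longrightarrow> pdist (flow f pol mu t)"
proof (induction t)
  case (Suc t)
  let ?m = "flow f pol mu t"
  have "t < T" using Suc.prems by simp
  then have m: "pdist ?m" and p: "\<And>x. pdist (pol t x)" and k: "\<And>x u. pdist (f t x u ?m)"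
    using Suc.IH pol f_dist by (auto simp: is_policy_def)
  have "(\<Sum>x'\<in>UNIV. flow f pol mu (Suc t) x')
          = (\<Sum>x'\<in>UNIV. \<Sum>x\<in>UNIV. \<Sum>u\<in>UNIV. f t x u ?m x' * (pol t x u * ?m x))"
    by (simp add: mult.assoc)
  also have "\<dots> = (\<Sum>x\<in>UNIV. \<Sum>u\<in>UNIV. \<Sum>x'\<in>UNIV. f t x u ?m x' * (pol t x u * ?m x))"
    by (rule sum_rotate3)
  also have "\<dots> = (\<Sum>x\<in>UNIV. \<Sum>u\<in>UNIV. (\<Sum>x'\<in>UNIV. f t x u ?m x') * (pol t x u * ?m x))"
    by (simp only: sum_distrib_right)
  also have "\<dots> = (\<Sum>x\<in>UNIV. (\<Sum>u\<in>UNIV. pol t x u) * ?m x)"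
    using k by (simp add: pdist_def sum_distrib_right)
  also have "\<dots> = 1"
    using p m by (simp add: pdist_def)
  finally show ?case
    using m p k by (auto simp: pdist_def intro!: sum_nonneg)
qed (simp add: mu)

lemma B_prop_pdist:
  "is_policy T pol \<Longrightarrow> k < K \<Longrightarrow> s \<le> T \<Longrightarrow> pdist (B_prop f K mu0 pol k s)"
  unfolding B_prop_def using flow_pdist mu0_dist by simp

lemma flow_step_dtv_le:
  assumes p1: "is_policy T p1" and p2: "is_policy T p2" and mu: "pdist mu" and t: "t < T"
    and d: "\<And>x. dtv (p1 t x) (p2 t x) \<le> d"
  shows "dtv (flow f p1 mu (Suc t)) (flow f p2 mu (Suc t))
           \<le> (Lf / 2 + 1) * dtv (flow f p1 mu t) (flow f p2 mu t) + d"
proof -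
  define m1 where "m1 = flow f p1 mu t"
  define m2 where "m2 = flow f p2 mu t"
  have m1: "pdist m1" and m2: "pdist m2"
    using flow_pdist[OF p1 mu] flow_pdist[OF p2 mu] t by (simp_all add: m1_def m2_def)
  have flow_Suc: "flow f p mu (Suc t) x' = (\<Sum>x\<in>UNIV. \<Sum>u\<in>UNIV. f t x u (flow f p mu t) x' * (p t x u * flow f p mu t x))"
    for p x' by (simp add: mult.assoc)
  have mixture: "(\<Sum>x'\<in>UNIV. \<bar>flow f p1 mu (Suc t) x' - flow f p2 mu (Suc t) x'\<bar>)
          \<le> Lf * dtv m1 m2 * (\<Sum>x\<in>UNIV. \<Sum>u\<in>UNIV. p1 t x u * m1 x)
            + (\<Sum>x\<in>UNIV. \<Sum>u\<in>UNIV. \<bar>p1 t x u * m1 x - p2 t x u * m2 x\<bar>)"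
    unfolding flow_Suc m1_def[symmetric] m2_def[symmetric]
  proof (rule mixture_l1_dist_le)
    show "pdist (f t x u m2)" "(\<Sum>x'\<in>UNIV. \<bar>f t x u m1 x' - f t x u m2 x'\<bar>) \<le> Lf * dtv m1 m2"
      "0 \<le> p1 t x u * m1 x" for x u
      using f_dist[OF t m2] f_lip[OF t m1 m2] p1 m1 t by (auto simp: is_policy_def pdist_def)
  qed
  have mass: "(\<Sum>x\<in>UNIV. \<Sum>u\<in>UNIV. p1 t x u * m1 x) = 1"
    using p1 m1 t by (simp add: is_policy_def pdist_def flip: sum_distrib_right)
  have joint: "(\<Sum>x\<in>UNIV. \<Sum>u\<in>UNIV. \<bar>p1 t x u * m1 x - p2 t x u * m2 x\<bar>) \<le> 2 * d + 2 * dtv m1 m2"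
    using p2 t by (intro joint_l1_dist_le m1 d) (simp add: is_policy_def)
  have "(\<Sum>x'\<in>UNIV. \<bar>flow f p1 mu (Suc t) x' - flow f p2 mu (Suc t) x'\<bar>)
          \<le> Lf * dtv m1 m2 + (2 * d + 2 * dtv m1 m2)"
    using mixture joint unfolding mass by linarith
  moreover have "(Lf / 2 + 1) * dtv m1 m2 = Lf * dtv m1 m2 / 2 + dtv m1 m2"
    by (simp add: algebra_simps)
  ultimately show ?thesis
    unfolding dtv_def[of "flow f p1 mu (Suc t)"] m1_def m2_def by linarith
qed

lemma flow_dtv_le:
  assumes p1: "is_policy T p1" and p2: "is_policy T p2" and mu: "pdist mu"
    and d: "\<And>t x. t < T \<Longrightarrow> dtv (p1 t x) (p2 t x) \<le> d" and d0: "0 \<le> d"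
  shows "t \<le> T \<Longrightarrow> dtv (flow f p1 mu t) (flow f p2 mu t) \<le> (Lf / 2 + 2) ^ t * d"
proof (induction t)
  case (Suc t)
  then have "t < T" by simp
  have "dtv (flow f p1 mu (Suc t)) (flow f p2 mu (Suc t)) \<le> (Lf / 2 + 1) * dtv (flow f p1 mu t) (flow f p2 mu t) + d"
    by (rule flow_step_dtv_le[OF p1 p2 mu \<open>t < T\<close> d[OF \<open>t < T\<close>]])
  also have "\<dots> \<le> (Lf / 2 + 1) * ((Lf / 2 + 2) ^ t * d) + d"
    using Suc.IH \<open>t < T\<close> Lf by (intro add_right_mono mult_left_mono) auto
  also have "\<dots> \<le> (Lf / 2 + 1) * ((Lf / 2 + 2) ^ t * d) + (Lf / 2 + 2) ^ t * d"
    using Lf d0 by (simp add: mult_le_cancel_right1 one_le_power)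
  also have "\<dots> = (Lf / 2 + 2) ^ Suc t * d"
    by (simp add: algebra_simps)
  finally show ?case .
qed (simp add: d0 dtv_def)

lemma Rmax_nonneg: "0 \<le> Rmax"
  using r_bound[of 0 "\<lambda>_. 1 / real CARD('x)" undefined undefined] T pdist_uniform by force

definition Qmax :: real where "Qmax = real T * Rmax"

lemma Qrem_abs_le:
  assumes pol: "is_policy T pol" and mu: "\<And>s. s < T \<Longrightarrow> pdist (mu s)"
  shows "t + n < T \<Longrightarrow> \<bar>Qrem f r pol mu n t x u\<bar> \<le> (real n + 1) * Rmax"
proof (induction n arbitrary: t x u)
  case 0
  then show ?case using r_bound mu by simp
next
  case (Suc n)
  then have "t < T" and "Suc t < T" by auto
  have "\<bar>\<Sum>u'\<in>UNIV. pol (Suc t) x' u' * Qrem f r pol mu n (Suc t) x' u'\<bar> \<le> (real n + 1) * Rmax" for x'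
    using pol \<open>Suc t < T\<close> Suc.IH[of "Suc t"] Suc.prems
    by (intro abs_expectation_le) (auto simp: is_policy_def add.commute)
  then have "\<bar>\<Sum>x'\<in>UNIV. f t x u (mu t) x' * (\<Sum>u'\<in>UNIV. pol (Suc t) x' u' * Qrem f r pol mu n (Suc t) x' u')\<bar>
               \<le> (real n + 1) * Rmax"
    by (rule abs_expectation_le[OF f_dist[OF \<open>t < T\<close> mu[OF \<open>t < T\<close>]]])
  moreover have "\<bar>r t x u (mu t)\<bar> \<le> Rmax"
    using r_bound[OF \<open>t < T\<close> mu[OF \<open>t < T\<close>]] .
  ultimately show ?case
    by (simp add: algebra_simps abs_triangle_ineq[THEN order_trans])
qed

lemma Qrem_abs_le_Qmax:
  assumes "is_policy T pol" "\<And>s. s < T \<Longrightarrow> pdist (mu s)" "t + n < T"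
  shows "\<bar>Qrem f r pol mu n t x u\<bar> \<le> Qmax"
proof -
  have "\<bar>Qrem f r pol mu n t x u\<bar> \<le> (real n + 1) * Rmax"
    using Qrem_abs_le[where mu=mu, OF assms(1,2)] assms(3) by blast
  also have "\<dots> \<le> Qmax"
    unfolding Qmax_def using assms(3) Rmax_nonneg by (intro mult_right_mono) auto
  finally show ?thesis .
qed

lemma Qfun_abs_le:
  assumes "is_policy T pol" "\<And>s. s < T \<Longrightarrow> pdist (mu s)" "t < T"
  shows "\<bar>Qfun T f r pol mu t x u\<bar> \<le> Qmax"
  unfolding Qfun_def using assms by (intro Qrem_abs_le_Qmax) auto

lemma Qmax_nonneg: "0 \<le> Qmax"
  using Rmax_nonneg by (simp add: Qmax_def)

lemma r_lip_le:
  "t < T \<Longrightarrow> pdist mu \<Longrightarrow> pdist mu' \<Longrightarrow> dtv mu mu' \<le> D \<Longrightarrow> \<bar>r t x u mu - r t x u mu'\<bar> \<le> Lr * D"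
  using r_lip[of t mu mu' x u] mult_left_mono[of "dtv mu mu'" D Lr] Lr by linarith

lemma f_lip_le:
  "t < T \<Longrightarrow> pdist mu \<Longrightarrow> pdist mu' \<Longrightarrow> dtv mu mu' \<le> D
     \<Longrightarrow> (\<Sum>x'\<in>UNIV. \<bar>f t x u mu x' - f t x u mu' x'\<bar>) \<le> Lf * D"
  using f_lip[of t mu mu' x u] mult_left_mono[of "dtv mu mu'" D Lf] Lf by linarith

lemma Qrem_Suc_diff_le:
  assumes s1: "is_policy T s1" and s2: "is_policy T s2"
    and mu1: "\<And>s. s < T \<Longrightarrow> pdist (mu1 s)" and mu2: "\<And>s. s < T \<Longrightarrow> pdist (mu2 s)"
    and tn: "Suc (t + n) < T" and D: "dtv (mu1 t) (mu2 t) \<le> D"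
    and Dl: "\<And>x' u'. \<bar>Qrem f r s1 mu1 n (Suc t) x' u' - Qrem f r s2 mu2 n (Suc t) x' u'\<bar> \<le> Dl"
    and e: "\<And>x'. dtv (s1 (Suc t) x') (s2 (Suc t) x') \<le> e"
  shows "\<bar>Qrem f r s1 mu1 (Suc n) t x u - Qrem f r s2 mu2 (Suc n) t x u\<bar>
           \<le> (Lr + Lf * Qmax) * D + 2 * Qmax * e + Dl"
proof -
  have t: "t < T" "Suc t < T" using tn by auto
  define V1 where "V1 x' = (\<Sum>u'\<in>UNIV. s1 (Suc t) x' u' * Qrem f r s1 mu1 n (Suc t) x' u')" for x'
  define V2 where "V2 x' = (\<Sum>u'\<in>UNIV. s2 (Suc t) x' u' * Qrem f r s2 mu2 n (Suc t) x' u')" for x'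
  have Q1: "\<bar>Qrem f r s1 mu1 n (Suc t) x' u'\<bar> \<le> Qmax" for x' u'
    using Qrem_abs_le_Qmax[of s1 mu1 "Suc t" n x' u'] s1 mu1 tn by auto
  have V1: "\<bar>V1 x'\<bar> \<le> Qmax" for x'
    unfolding V1_def using s1 t Q1 by (intro abs_expectation_le) (auto simp: is_policy_def)
  have V_diff: "\<bar>V1 x' - V2 x'\<bar> \<le> 2 * Qmax * e + Dl" for x'
  proof -
    have "\<bar>V1 x' - V2 x'\<bar> \<le> Qmax * (2 * dtv (s1 (Suc t) x') (s2 (Suc t) x')) + Dl"
      unfolding V1_def V2_def dtv_def using s2 t Q1 Dl
      by (simp, intro abs_mixed_expectation_diff_le) (auto simp: is_policy_def)
    then show ?thesis
      using mult_left_mono[OF e Qmax_nonneg, of x'] by linarith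
  qed
  have "\<bar>(\<Sum>x'\<in>UNIV. f t x u (mu1 t) x' * V1 x') - (\<Sum>x'\<in>UNIV. f t x u (mu2 t) x' * V2 x')\<bar>
          \<le> Qmax * (\<Sum>x'\<in>UNIV. \<bar>f t x u (mu1 t) x' - f t x u (mu2 t) x'\<bar>) + (2 * Qmax * e + Dl)"
    by (rule abs_mixed_expectation_diff_le[where Q=V1 and Q'=V2, OF f_dist[OF t(1) mu2[OF t(1)]] V1 V_diff])
  also have "\<dots> \<le> Qmax * (Lf * D) + (2 * Qmax * e + Dl)"
    using f_lip_le[OF t(1) mu1[OF t(1)] mu2[OF t(1)] D] Qmax_nonneg by (intro add_right_mono mult_left_mono)
  finally have "\<bar>(\<Sum>x'\<in>UNIV. f t x u (mu1 t) x' * V1 x') - (\<Sum>x'\<in>UNIV. f t x u (mu2 t) x' * V2 x')\<bar>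
                  \<le> Qmax * (Lf * D) + (2 * Qmax * e + Dl)" .
  moreover have "\<bar>r t x u (mu1 t) - r t x u (mu2 t)\<bar> \<le> Lr * D"
    by (rule r_lip_le[OF t(1) mu1[OF t(1)] mu2[OF t(1)] D])
  moreover have "Lr * D + Qmax * (Lf * D) = (Lr + Lf * Qmax) * D"
    by (simp add: algebra_simps)
  ultimately show ?thesis
    unfolding V1_def V2_def Qrem.simps by linarith
qed

abbreviation Phi :: "real \<Rightarrow> (nat \<Rightarrow> 'x \<Rightarrow> 'u \<Rightarrow> real) \<Rightarrow> (nat \<Rightarrow> 'x \<Rightarrow> 'u \<Rightarrow> real)"
  where "Phi alpha pol \<equiv> B_opt T f r K w tau alpha nu (B_prop f K mu0 pol)"

definition response_sensitivity :: real
  where "response_sensitivity = real CARD('u) * entropic_sensitivity tau Qmax / m"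

lemma B_opt_dtv_le:
  fixes S S' :: "nat \<Rightarrow> nat \<Rightarrow> 'x \<Rightarrow> real"
  assumes alpha: "alpha > 0"
    and S: "\<And>k s. k < K \<Longrightarrow> s < T \<Longrightarrow> pdist (S k s)"
    and S': "\<And>k s. k < K \<Longrightarrow> s < T \<Longrightarrow> pdist (S' k s)"
    and t: "t < T"
    and Dl: "\<And>k x u. k < K \<Longrightarrow> \<bar>Qfun T f r (B_opt T f r K w tau alpha nu S) (S k) t x u
                                  - Qfun T f r (B_opt T f r K w tau alpha nu S') (S' k) t x u\<bar> \<le> Dl"
  shows "dtv (B_opt T f r K w tau alpha nu S t x) (B_opt T f r K w tau alpha nu S' t x) \<le> response_sensitivity * Dl / alpha"
proof -
  define s1 where "s1 = B_opt T f r K w tau alpha nu S"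
  define s2 where "s2 = B_opt T f r K w tau alpha nu S'"
  have p1: "is_policy T s1" and p2: "is_policy T s2"
    using B_opt_policy[OF alpha] by (simp_all add: s1_def s2_def)
  have opt1: "stage_optimal alpha S s1 t" and opt2: "stage_optimal alpha S' s2 t"
    using B_opt_is_opt_resp[OF alpha] t by (simp_all add: s1_def s2_def is_opt_resp_iff_stage_optimal)
  have "dtv (s1 t x) (s2 t x) \<le> real CARD('u) * entropic_sensitivity tau Qmax * Dl / (alpha * m)"
  proof (rule regularized_minimizer_dtv_le[where Qa="\<lambda>k. Qfun T f r s1 (S k) t x"
        and Qb="\<lambda>k. Qfun T f r s2 (S' k) t x", OF nu_sc m alpha tau])
    show "\<bar>Qfun T f r s1 (S k) t x u\<bar> \<le> Qmax" "\<bar>Qfun T f r s2 (S' k) t x u\<bar> \<le> Qmax" if "k < K" for k u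
      using Qfun_abs_le[of s1 "S k" t x u] Qfun_abs_le[of s2 "S' k" t x u] p1 p2 S S' that t by auto
    show "\<bar>Qfun T f r s1 (S k) t x u - Qfun T f r s2 (S' k) t x u\<bar> \<le> Dl" if "k < K" for k u
      using Dl[OF that] by (simp add: s1_def s2_def)
    show "pdist (s1 t x)" "pdist (s2 t x)"
      using p1 p2 t by (simp_all add: is_policy_def)
  qed (use opt1 opt2 w in \<open>auto simp: stage_optimal_def stage_cost_def\<close>)
  also have "\<dots> = response_sensitivity * Dl / alpha"
    using m by (simp add: response_sensitivity_def)
  finally show ?thesis
    by (simp add: s1_def s2_def)
qed

text \<open>The hypothesis on \<open>\<alpha>\<close>
  makes the best responses at the next time no farther apart than their \<open>Q\<close>-functions
  (\<open>B_opt_dtv_le\<close>), which closes the induction.\<close>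

lemma Qfun_B_opt_diff_le:
  fixes S S' :: "nat \<Rightarrow> nat \<Rightarrow> 'x \<Rightarrow> real"
  assumes alpha: "response_sensitivity \<le> alpha" "0 < alpha"
    and S: "\<And>k s. k < K \<Longrightarrow> s < T \<Longrightarrow> pdist (S k s)"
    and S': "\<And>k s. k < K \<Longrightarrow> s < T \<Longrightarrow> pdist (S' k s)"
    and D: "\<And>k s. k < K \<Longrightarrow> s < T \<Longrightarrow> dtv (S k s) (S' k s) \<le> D" and D0: "0 \<le> D"
  shows "n < T \<Longrightarrow> k < K \<Longrightarrow>
           \<bar>Qfun T f r (B_opt T f r K w tau alpha nu S) (S k) (T - 1 - n) x u
             - Qfun T f r (B_opt T f r K w tau alpha nu S') (S' k) (T - 1 - n) x u\<bar>
           \<le> (Lr + Lf * Qmax) * (2 * Qmax + 2) ^ n * D"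
proof (induction n arbitrary: k x u)
  case 0
  have "T - 1 < T" using T by simp
  then have "\<bar>r (T - 1) x u (S k (T - 1)) - r (T - 1) x u (S' k (T - 1))\<bar> \<le> Lr * D"
    using S S' D \<open>k < K\<close> by (intro r_lip_le) auto
  also have "\<dots> \<le> (Lr + Lf * Qmax) * (2 * Qmax + 2) ^ 0 * D"
    using Lf Qmax_nonneg D0 by (simp add: mult_right_mono)
  finally show ?case
    by (simp add: Qfun_def)
next
  case (Suc n)
  define s1 where "s1 = B_opt T f r K w tau alpha nu S"
  define s2 where "s2 = B_opt T f r K w tau alpha nu S'"
  define t where "t = T - 1 - Suc n"
  define Dn where "Dn = (Lr + Lf * Qmax) * (2 * Qmax + 2) ^ n * D"
  have t: "Suc t = T - 1 - n" "T - 1 - t = Suc n" "Suc (t + n) < T" "T - 1 - Suc t = n"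
    using Suc.prems by (auto simp: t_def)
  have Dn0: "0 \<le> Dn"
    using Lr Lf Qmax_nonneg D0 by (simp add: Dn_def)
  have IH: "\<bar>Qfun T f r s1 (S k') (Suc t) x' u' - Qfun T f r s2 (S' k') (Suc t) x' u'\<bar> \<le> Dn"
    if "k' < K" for k' x' u'
    using Suc.IH[OF _ that] Suc.prems by (simp add: t s1_def s2_def Dn_def)
  have "dtv (s1 (Suc t) x') (s2 (Suc t) x') \<le> response_sensitivity * Dn / alpha" for x'
    using t IH unfolding s1_def s2_def by (intro B_opt_dtv_le[OF alpha(2) S S']) auto
  also have "response_sensitivity * Dn / alpha \<le> Dn"
    using alpha Dn0 mult_right_mono[OF alpha(1) Dn0] by (simp add: divide_le_eq mult.commute)
  finally have e: "dtv (s1 (Suc t) x') (s2 (Suc t) x') \<le> Dn" for x' .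
  have "\<bar>Qrem f r s1 (S k) (Suc n) t x u - Qrem f r s2 (S' k) (Suc n) t x u\<bar>
          \<le> (Lr + Lf * Qmax) * D + 2 * Qmax * Dn + Dn"
  proof (rule Qrem_Suc_diff_le)
    show "\<bar>Qrem f r s1 (S k) n (Suc t) x' u' - Qrem f r s2 (S' k) n (Suc t) x' u'\<bar> \<le> Dn" for x' u'
      using IH[OF Suc.prems(2), of x' u'] unfolding Qfun_def t(4) .
  qed (use B_opt_policy[OF alpha(2)] S S' D Suc.prems t(3) e in \<open>auto simp: s1_def s2_def\<close>)
  also have "\<dots> \<le> (Lr + Lf * Qmax) * (2 * Qmax + 2) ^ Suc n * D"
  proof -
    have "(Lr + Lf * Qmax) * D * 1 \<le> (Lr + Lf * Qmax) * D * (2 * Qmax + 2) ^ n"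
      using Lr Lf Qmax_nonneg D0 by (intro mult_left_mono one_le_power) auto
    then show ?thesis
      by (simp add: Dn_def algebra_simps)
  qed
  finally show ?case
    unfolding t_def[symmetric] Qfun_def t(2) s1_def s2_def .
qed

definition Phi_lipschitz :: real
  where "Phi_lipschitz = response_sensitivity * (Lr + Lf * Qmax) * (2 * Qmax + 2) ^ T * (Lf / 2 + 2) ^ T"

lemma Phi_dtv_le:
  assumes alpha: "response_sensitivity \<le> alpha" "0 < alpha"
    and p1: "is_policy T p1" and p2: "is_policy T p2"
    and d: "\<And>t x. t < T \<Longrightarrow> dtv (p1 t x) (p2 t x) \<le> d" and d0: "0 \<le> d"
    and t: "t < T"
  shows "dtv (Phi alpha p1 t x) (Phi alpha p2 t x) \<le> Phi_lipschitz * d / alpha"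
proof -
  define D where "D = (Lf / 2 + 2) ^ T * d"
  have D0: "0 \<le> D"
    using Lf d0 by (simp add: D_def)
  have S: "pdist (B_prop f K mu0 p1 k s)" "pdist (B_prop f K mu0 p2 k s)" if "k < K" "s < T" for k s
    using B_prop_pdist[OF p1] B_prop_pdist[OF p2] that by auto
  have SD: "dtv (B_prop f K mu0 p1 k s) (B_prop f K mu0 p2 k s) \<le> D" if "k < K" "s < T" for k s
  proof -
    have "dtv (B_prop f K mu0 p1 k s) (B_prop f K mu0 p2 k s) \<le> (Lf / 2 + 2) ^ s * d"
      using flow_dtv_le[OF p1 p2 mu0_dist[OF that(1)] d d0] that by (simp add: B_prop_def)
    also have "\<dots> \<le> D"
      unfolding D_def using that Lf d0 by (intro mult_right_mono power_increasing) auto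
    finally show ?thesis .
  qed
  have "\<bar>Qfun T f r (Phi alpha p1) (B_prop f K mu0 p1 k) t x' u - Qfun T f r (Phi alpha p2) (B_prop f K mu0 p2 k) t x' u\<bar>
          \<le> (Lr + Lf * Qmax) * (2 * Qmax + 2) ^ T * D" if "k < K" for k x' u
  proof -
    have "T - 1 - (T - 1 - t) = t" "T - 1 - t < T" using t by auto
    then have "\<bar>Qfun T f r (Phi alpha p1) (B_prop f K mu0 p1 k) t x' u - Qfun T f r (Phi alpha p2) (B_prop f K mu0 p2 k) t x' u\<bar>
                 \<le> (Lr + Lf * Qmax) * (2 * Qmax + 2) ^ (T - 1 - t) * D"
      using Qfun_B_opt_diff_le[where S="B_prop f K mu0 p1" and S'="B_prop f K mu0 p2" and D=D
          and n="T - 1 - t" and k=k and x=x' and u=u, OF alpha S(1) S(2) SD D0 _ that]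
      by simp
    also have "\<dots> \<le> (Lr + Lf * Qmax) * (2 * Qmax + 2) ^ T * D"
      using Lr Lf Qmax_nonneg d0 unfolding D_def
      by (intro mult_right_mono mult_left_mono power_increasing) auto
    finally show ?thesis .
  qed
  then have "dtv (Phi alpha p1 t x) (Phi alpha p2 t x) \<le> response_sensitivity * ((Lr + Lf * Qmax) * (2 * Qmax + 2) ^ T * D) / alpha"
    by (intro B_opt_dtv_le[where S="B_prop f K mu0 p1" and S'="B_prop f K mu0 p2", OF alpha(2) S(1) S(2) t])
  then show ?thesis
    by (simp add: Phi_lipschitz_def D_def mult_ac)
qed

lemma dPi_Phi_le:
  assumes "response_sensitivity \<le> alpha" "0 < alpha" "is_policy T p1" "is_policy T p2"
  shows "dPi T (Phi alpha p1) (Phi alpha p2) \<le> Phi_lipschitz / alpha * dPi T p1 p2"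
proof (rule dPi_le[OF T])
  fix t x assume "t < T"
  have "dtv (Phi alpha p1 t x) (Phi alpha p2 t x) \<le> Phi_lipschitz * dPi T p1 p2 / alpha"
    by (rule Phi_dtv_le[OF assms _ dPi_nonneg[OF T] \<open>t < T\<close>]) (rule dtv_le_dPi)
  then show "dtv (Phi alpha p1 t x) (Phi alpha p2 t x) \<le> Phi_lipschitz / alpha * dPi T p1 p2"
    by simp
qed

definition alpha0 :: real
  where "alpha0 = max (max response_sensitivity 1) (2 * Phi_lipschitz)"

lemma dPi_Phi_le_half:
  assumes "alpha0 \<le> alpha" "is_policy T p" "is_policy T q"
  shows "dPi T (Phi alpha p) (Phi alpha q) \<le> 1 / 2 * dPi T p q"
proof -
  have alpha: "response_sensitivity \<le> alpha" "0 < alpha" "Phi_lipschitz / alpha \<le> 1 / 2"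
    using assms(1) by (auto simp: alpha0_def divide_le_eq)
  have "dPi T (Phi alpha p) (Phi alpha q) \<le> Phi_lipschitz / alpha * dPi T p q"
    by (rule dPi_Phi_le[OF alpha(1,2) assms(2,3)])
  also have "\<dots> \<le> 1 / 2 * dPi T p q"
    using alpha(3) by (rule mult_right_mono) (rule dPi_nonneg[OF T])
  finally show ?thesis .
qed

end

theorem theorem4:
  fixes T K :: nat
    and f :: "nat \<Rightarrow> 'x::finite \<Rightarrow> 'u::finite \<Rightarrow> ('x \<Rightarrow> real) \<Rightarrow> 'x \<Rightarrow> real"
    and r :: "nat \<Rightarrow> 'x \<Rightarrow> 'u \<Rightarrow> ('x \<Rightarrow> real) \<Rightarrow> real"
    and mu0 :: "nat \<Rightarrow> 'x \<Rightarrow> real"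
    and w :: "nat \<Rightarrow> real"
    and nu :: "('u \<Rightarrow> real) \<Rightarrow> real"
    and Rmax Lf Lr tau m beta :: real
  assumes T: "T \<ge> 1"
    and f_dist: "\<And>t x u mu. t < T \<Longrightarrow> pdist mu \<Longrightarrow> pdist (f t x u mu)"
    and r_bound: "\<And>t x u mu. t < T \<Longrightarrow> pdist mu \<Longrightarrow> \<bar>r t x u mu\<bar> \<le> Rmax"
    and Lf: "Lf > 0" and Lr: "Lr > 0"
    and f_lip: "\<And>t x u mu mu'. t < T \<Longrightarrow> pdist mu \<Longrightarrow> pdist mu' \<Longrightarrow>
                  (\<Sum>x'\<in>UNIV. \<bar>f t x u mu x' - f t x u mu' x'\<bar>) \<le> Lf * dtv mu mu'"
    and r_lip: "\<And>t x u mu mu'. t < T \<Longrightarrow> pdist mu \<Longrightarrow> pdist mu' \<Longrightarrow>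
                  \<bar>r t x u mu - r t x u mu'\<bar> \<le> Lr * dtv mu mu'"
    and K: "K \<ge> 1"
    and mu0_dist: "\<And>k. k < K \<Longrightarrow> pdist (mu0 k)"
    and mu0_inj: "inj_on mu0 {..<K}"
    and w_nonneg: "\<And>k. k < K \<Longrightarrow> 0 \<le> w k"
    and w_sum: "(\<Sum>k<K. w k) = 1"
    and tau: "tau > 0"
    and m: "m > 0"
    and nu_sc: "strongly_convex_simplex m nu"
    and nu_cont: "continuous_on {p. pdist p} nu"
    and beta: "0 < beta" "beta < 1"
  shows "\<exists>alpha0. \<forall>alpha \<ge> alpha0. \<forall>pi0. is_policy T pi0 \<longrightarrow>
           (\<exists>pistar. is_policy T pistar \<and>
              (\<lambda>j. dPi T (fst (rqfp (\<lambda>pol. B_opt T f r K w tau alpha nu (B_prop f K mu0 pol)) beta pi0 j))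
                          pistar) \<longlonglongrightarrow> 0 \<and>
              is_MF_RQE T f r K mu0 w tau alpha nu pistar (B_prop f K mu0 pistar))"
proof -
  interpret mean_field_game T K f r w nu tau m mu0 Rmax Lf Lr
    by (unfold_locales; fact w_nonneg w_sum tau m nu_sc nu_cont T f_dist r_bound f_lip r_lip mu0_dist
          less_imp_le[OF Lf] less_imp_le[OF Lr])
  show ?thesis
  proof (intro exI[of _ alpha0] allI impI)
    fix alpha :: real and pi0 :: "nat \<Rightarrow> 'x \<Rightarrow> 'u \<Rightarrow> real"
    assume alpha: "alpha0 \<le> alpha" and pi0: "is_policy T pi0"
    have Phi_policy: "is_policy T (Phi alpha p)" for p
      using alpha by (intro B_opt_policy) (auto simp: alpha0_def)
    have Phi_contr: "dPi T (Phi alpha p) (Phi alpha q) \<le> 1 / 2 * dPi T p q"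
      if "is_policy T p" "is_policy T q" for p q
      using dPi_Phi_le_half[OF alpha that] .
    have "(0::real) \<le> 1 / 2" "(1 / 2 :: real) < 1" "0 \<le> beta" "beta < 1"
      using beta by auto
    then obtain pistar where "is_policy T pistar" "Phi alpha pistar = pistar"
      and "(\<lambda>j. dPi T (fst (rqfp (Phi alpha) beta pi0 j)) pistar) \<longlonglongrightarrow> 0"
      using rq_fictitious_play_converges[where Phi="Phi alpha", OF T Phi_policy Phi_contr _ _ _ _ pi0]
      by blast
    then show "\<exists>pistar. is_policy T pistar \<and>
              (\<lambda>j. dPi T (fst (rqfp (\<lambda>pol. B_opt T f r K w tau alpha nu (B_prop f K mu0 pol)) beta pi0 j))
                          pistar) \<longlonglongrightarrow> 0 \<and>
              is_MF_RQE T f r K mu0 w tau alpha nu pistar (B_prop f K mu0 pistar)"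
      by (auto simp: is_MF_RQE_def)
  qed
qed

end
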